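(* Let $t(\lambda_-)=u\,s_{\ell_1}\cdots s_{\ell_L}$ be the reduced expression determined by the order $\prec'$ as described in the context, and let $M=\ell(v(\lambda_-))$. Then $u\,s_{\ell_{M+1}}\cdots s_{\ell_L}$ is a reduced expression for $m_\lambda$, the shortest element of the coset $t(\lambda)W$. Moreover, if for $1\le k\le M$ we write $u s_{\ell_k}=s_{i'_k}u$, then $i'_k=i_k$, where $w_\circ=s_{i_1}\cdots s_{i_N}$ is the fixed reduced expression.
   Context: Setting: $\mathfrak g$ finite-dimensional simple Lie algebra, simple roots $\{\alpha_i\}_{i\in I}$, simple coroots $\{\alpha_i^\vee\}$, roots $\Delta=\Delta^+\sqcup\Delta^-$, weights $P$, dominant weights $P^+$, Weyl group $W$, longest element $w_\circ$. For $\lambda\in P^+$: $S=\{i:\langle\lambda,\alpha_i^\vee\rangle=0\}$, $W_S=\langle s_i:i\in S\rangle$ with longest element $w_\circ^S$, $\Delta^+_S$ the positive roots in $\sum_{i\in S}\mathbb Z\alpha_i$; $\lambda_-=w_\circ\lambda$; $v(\lambda_-)$ the minimal-length element of $\{x\in W: x\lambda=\lambda_-\}$, so $w_\circ=v(\lambda_-)w_\circ^S$ with lengths adding. Fix reduced expressions $v(\lambda_-)=s_{i_1}\cdots s_{i_M}$ and $w_\circ^S=s_{i_{M+1}}\cdots s_{i_N}$, so $w_\circ=s_{i_1}\cdots s_{i_N}$ is reduced; put $\beta_j=s_{i_N}\cdots s_{i_{j+1}}\alpha_{i_j}$; then $\Delta^+\setminus\Delta^+_S=\{\beta_1,\dots,\beta_M\}$,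 $\Delta^+_S=\{\beta_{M+1},\dots,\beta_N\}$, and the total order $\prec$ on $\Delta^+$ is $\beta_1\succ\beta_2\succ\dots\succ\beta_N$. Affine: real roots of the untwisted affinization of the dual root system $\widetilde\Delta_{\rm aff}=\{\alpha^\vee+a\tilde\delta\}$, positive ones $\widetilde\Delta^+_{\rm aff}$ ($a>0$, or $a=0,\alpha\in\Delta^+$), $\widetilde\Delta^-_{\rm aff}=-\widetilde\Delta^+_{\rm aff}$; simple roots $\alpha_i^\vee$ ($i\in I$), $\alpha_0^\vee=\tilde\delta-\varphi^\vee$ ($\varphi$ highest short root), $I_{\rm aff}=I\sqcup\{0\}$; $\beta=\bar\beta+\deg(\beta)\tilde\delta$. $W_{\rm ext}=t(P)\rtimes W$ acting by $v\,t(\nu)(\bar\beta+r\tilde\delta)=v\bar\beta+(r-\langle\nu,\bar\beta\rangle)\tilde\delta$; $\ell(x)=\#(\widetilde\Delta^+_{\rm aff}\cap x^{-1}\widetilde\Delta^-_{\rm aff})$; $\Omega$ the length-zero elements; $W_{\rm ext}=\Omega\ltimes\langle s_i:i\in I_{\rm aff}\rangle$. The map $\Phi:\widetilde\Delta^+_{\rm aff}\cap t(\lambda_-)^{-1}\widetilde\Delta^-_{\rm aff}\to\mathbb Q_{\ge0}\times(\Delta^+\setminus\Delta^+_S)$, $\Phi(\beta)=\Big(\frac{\langle\lambda_-,\bar\beta\rangle-\deg(\beta)}{\langle\lambda_-,\bar\beta\rangle},\,w_\circ(\bar\beta)^\vee\Big)$ (where $(\alpha^\vee)^\vee=\alpha$)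 is injective. Order the target lexicographically: $(a,\alpha)<(b,\beta)$ iff $a<b$, or $a=b$ and $\alpha\succ\beta$; $\prec'$ is the pullback order. The reduced expression $t(\lambda_-)=u\,s_{\ell_1}\cdots s_{\ell_L}$ ($u\in\Omega$, $\ell_k\in I_{\rm aff}$) is the unique one with $\tilde\beta_j:=s_{\ell_L}\cdots s_{\ell_{j+1}}\alpha^\vee_{\ell_j}$ satisfying $\tilde\beta_1\prec'\dots\prec'\tilde\beta_L$ exhausting $\widetilde\Delta^+_{\rm aff}\cap t(\lambda_-)^{-1}\widetilde\Delta^-_{\rm aff}$. *)

theory Defs
  imports "HOL-Analysis.Analysis"
begin

definition coroot :: "'a::euclidean_space \<Rightarrow> 'a" where
  "coroot \<alpha> = (2 / (\<alpha> \<bullet> \<alpha>)) *\<^sub>R \<alpha>"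

definition refl :: "'a::euclidean_space \<Rightarrow> 'a \<Rightarrow> 'a" where
  "refl \<alpha> x = x - (x \<bullet> coroot \<alpha>) *\<^sub>R \<alpha>"

definition root_system :: "'a::euclidean_space set \<Rightarrow> bool" where
  "root_system R \<longleftrightarrow> finite R \<and> 0 \<notin> R \<and> span R = UNIV \<and>
     (\<forall>\<alpha>\<in>R. \<forall>\<beta>\<in>R. refl \<alpha> \<beta> \<in> R) \<and>
     (\<forall>\<alpha>\<in>R. \<forall>\<beta>\<in>R. \<beta> \<bullet> coroot \<alpha> \<in> \<int>) \<and>
     (\<forall>\<alpha>\<in>R. \<forall>c::real. c *\<^sub>R \<alpha> \<in> R \<longrightarrow> c = 1 \<or> c = -1)"

definition irreducible_rs :: "'a::euclidean_space set \<Rightarrow> bool" where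
  "irreducible_rs R \<longleftrightarrow> \<not> (\<exists>A B. A \<noteq> {} \<and> B \<noteq> {} \<and> A \<union> B = R \<and> A \<inter> B = {} \<and>
       (\<forall>\<alpha>\<in>A. \<forall>\<beta>\<in>B. \<alpha> \<bullet> \<beta> = 0))"

definition nonneg_comb :: "('i::finite \<Rightarrow> 'a::euclidean_space) \<Rightarrow> 'a \<Rightarrow> bool" where
  "nonneg_comb simple x \<longleftrightarrow> (\<exists>c::'i \<Rightarrow> nat. x = (\<Sum>i\<in>UNIV. real (c i) *\<^sub>R simple i))"

definition pos_roots :: "'a::euclidean_space set \<Rightarrow> ('i::finite \<Rightarrow> 'a) \<Rightarrow> 'a set" where
  "pos_roots R simple = {\<alpha> \<in> R. nonneg_comb simple \<alpha>}"

definition simple_system :: "'a::euclidean_space set \<Rightarrow> ('i::finite \<Rightarrow> 'a) \<Rightarrow> bool" where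
  "simple_system R simple \<longleftrightarrow> inj simple \<and> range simple \<subseteq> R \<and> independent (range simple) \<and>
     (\<forall>\<alpha>\<in>R. \<alpha> \<in> pos_roots R simple \<or> - \<alpha> \<in> pos_roots R simple)"

definition highest_short_root :: "'a::euclidean_space set \<Rightarrow> ('i::finite \<Rightarrow> 'a) \<Rightarrow> 'a \<Rightarrow> bool" where
  "highest_short_root R simple \<phi> \<longleftrightarrow> \<phi> \<in> R \<and> (\<forall>\<beta>\<in>R. \<phi> \<bullet> \<phi> \<le> \<beta> \<bullet> \<beta>) \<and>
     (\<forall>\<beta>\<in>R. \<beta> \<bullet> \<beta> = \<phi> \<bullet> \<phi> \<longrightarrow> nonneg_comb simple (\<phi> - \<beta>))"

definition weights :: "'a::euclidean_space set \<Rightarrow> 'a set" where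
  "weights R = {\<nu>. \<forall>\<alpha>\<in>R. \<nu> \<bullet> coroot \<alpha> \<in> \<int>}"

definition dominant_weights :: "'a::euclidean_space set \<Rightarrow> ('i::finite \<Rightarrow> 'a) \<Rightarrow> 'a set" where
  "dominant_weights R simple = {lam \<in> weights R. \<forall>i. lam \<bullet> coroot (simple i) \<ge> 0}"

definition word :: "('i \<Rightarrow> 'a::euclidean_space) \<Rightarrow> 'i list \<Rightarrow> 'a \<Rightarrow> 'a" where
  "word simple ws = foldr (\<lambda>i f. refl (simple i) \<circ> f) ws id"

definition weyl :: "('i \<Rightarrow> 'a::euclidean_space) \<Rightarrow> ('a \<Rightarrow> 'a) set" where
  "weyl simple = {word simple ws | ws. True}"

definition weyl_sub :: "('i \<Rightarrow> 'a::euclidean_space) \<Rightarrow> 'i set \<Rightarrow> ('a \<Rightarrow> 'a) set" where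
  "weyl_sub simple S = {word simple ws | ws. set ws \<subseteq> S}"

definition wlen :: "('i \<Rightarrow> 'a::euclidean_space) \<Rightarrow> ('a \<Rightarrow> 'a) \<Rightarrow> nat" where
  "wlen simple w = (LEAST n. \<exists>ws. length ws = n \<and> word simple ws = w)"

definition is_longest :: "('i \<Rightarrow> 'a::euclidean_space) \<Rightarrow> ('a \<Rightarrow> 'a) set \<Rightarrow> ('a \<Rightarrow> 'a) \<Rightarrow> bool" where
  "is_longest simple G w \<longleftrightarrow> w \<in> G \<and> (\<forall>y\<in>G. wlen simple y \<le> wlen simple w)"

definition reduced_word :: "('i \<Rightarrow> 'a::euclidean_space) \<Rightarrow> 'i list \<Rightarrow> bool" where
  "reduced_word simple ws \<longleftrightarrow> length ws = wlen simple (word simple ws)"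

text \<open>beta_j = s_{i_N} ... s_{i_{j+1}} alpha_{i_j}, listed for j = 1..N (0-based list).\<close>
definition fin_betas :: "('i \<Rightarrow> 'a::euclidean_space) \<Rightarrow> 'i list \<Rightarrow> 'a list" where
  "fin_betas simple ws =
     map (\<lambda>j. word simple (rev (drop (Suc j) ws)) (simple (ws ! j))) [0..<length ws]"

text \<open>alpha succ beta in the total order: beta_1 succ beta_2 succ ... succ beta_N.\<close>
definition fin_succ :: "('i \<Rightarrow> 'a::euclidean_space) \<Rightarrow> 'i list \<Rightarrow> 'a \<Rightarrow> 'a \<Rightarrow> bool" where
  "fin_succ simple ws \<alpha> \<beta> \<longleftrightarrow>
     (\<exists>j k. j < k \<and> k < length ws \<and> fin_betas simple ws ! j = \<alpha> \<and> fin_betas simple ws ! k = \<beta>)"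

text \<open>An affine root alpha^vee + a delta is represented as the pair (coroot alpha, a).\<close>
definition aff_roots :: "'a::euclidean_space set \<Rightarrow> ('a \<times> real) set" where
  "aff_roots R = {(coroot \<alpha>, of_int a) | \<alpha> a. \<alpha> \<in> R}"

definition aff_pos :: "'a::euclidean_space set \<Rightarrow> ('i::finite \<Rightarrow> 'a) \<Rightarrow> ('a \<times> real) set" where
  "aff_pos R simple = {(coroot \<alpha>, of_int a) | \<alpha> a. \<alpha> \<in> R \<and>
       (a > 0 \<or> (a = 0 \<and> \<alpha> \<in> pos_roots R simple))}"

definition aff_neg :: "'a::euclidean_space set \<Rightarrow> ('i::finite \<Rightarrow> 'a) \<Rightarrow> ('a \<times> real) set" where
  "aff_neg R simple = uminus ` aff_pos R simple"

text \<open>The element v t(nu), via its action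
  v t(nu)(x + r delta) = v x + (r - <nu, x>) delta.\<close>
definition ext_elt :: "('a::euclidean_space \<Rightarrow> 'a) \<Rightarrow> 'a \<Rightarrow> ('a \<times> real \<Rightarrow> 'a \<times> real)" where
  "ext_elt v \<nu> = (\<lambda>(x, r). (v x, r - \<nu> \<bullet> x))"

definition transl :: "'a::euclidean_space \<Rightarrow> ('a \<times> real \<Rightarrow> 'a \<times> real)" where
  "transl \<nu> = ext_elt id \<nu>"

definition ext_weyl :: "'a::euclidean_space set \<Rightarrow> ('i \<Rightarrow> 'a) \<Rightarrow> ('a \<times> real \<Rightarrow> 'a \<times> real) set" where
  "ext_weyl R simple = {ext_elt v \<nu> | v \<nu>. v \<in> weyl simple \<and> \<nu> \<in> weights R}"

definition alen :: "'a::euclidean_space set \<Rightarrow> ('i::finite \<Rightarrow> 'a) \<Rightarrow> ('a \<times> real \<Rightarrow> 'a \<times> real) \<Rightarrow> nat" where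
  "alen R simple x = card {\<beta> \<in> aff_pos R simple. x \<beta> \<in> aff_neg R simple}"

definition Omega :: "'a::euclidean_space set \<Rightarrow> ('i::finite \<Rightarrow> 'a) \<Rightarrow> ('a \<times> real \<Rightarrow> 'a \<times> real) set" where
  "Omega R simple = {x \<in> ext_weyl R simple. alen R simple x = 0}"

text \<open>Affine simple indices: Some i for i in I, None for the index 0.\<close>
definition aff_simple_root :: "('i \<Rightarrow> 'a::euclidean_space) \<Rightarrow> 'a \<Rightarrow> 'i option \<Rightarrow> 'a \<times> real" where
  "aff_simple_root simple \<phi> j = (case j of Some i \<Rightarrow> (coroot (simple i), 0) | None \<Rightarrow> (- coroot \<phi>, 1))"

text \<open>s_i = s_{alpha_i} for i in I, and s_0 = s_phi t(-phi) (reflection in delta - phi^vee).\<close>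
definition aff_refl :: "('i \<Rightarrow> 'a::euclidean_space) \<Rightarrow> 'a \<Rightarrow> 'i option \<Rightarrow> ('a \<times> real \<Rightarrow> 'a \<times> real)" where
  "aff_refl simple \<phi> j = (case j of Some i \<Rightarrow> ext_elt (refl (simple i)) 0 | None \<Rightarrow> ext_elt (refl \<phi>) (- \<phi>))"

definition aword :: "('i \<Rightarrow> 'a::euclidean_space) \<Rightarrow> 'a \<Rightarrow> 'i option list \<Rightarrow> ('a \<times> real \<Rightarrow> 'a \<times> real)" where
  "aword simple \<phi> ls = foldr (\<lambda>j f. aff_refl simple \<phi> j \<circ> f) ls id"

text \<open>tilde beta_j = s_{l_L} ... s_{l_{j+1}} alpha^vee_{l_j} (0-based list).\<close>
definition aff_betas :: "('i \<Rightarrow> 'a::euclidean_space) \<Rightarrow> 'a \<Rightarrow> 'i option list \<Rightarrow> ('a \<times> real) list" where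
  "aff_betas simple \<phi> ls =
     map (\<lambda>j. aword simple \<phi> (rev (drop (Suc j) ls)) (aff_simple_root simple \<phi> (ls ! j))) [0..<length ls]"

text \<open>The map Phi (lm = lambda_-, w0 = longest element); second component w0(beta-bar)^vee.\<close>
definition Phi :: "'a::euclidean_space \<Rightarrow> ('a \<Rightarrow> 'a) \<Rightarrow> 'a \<times> real \<Rightarrow> real \<times> 'a" where
  "Phi lm w0 \<beta> = ((lm \<bullet> fst \<beta> - snd \<beta>) / (lm \<bullet> fst \<beta>), coroot (w0 (fst \<beta>)))"

definition aff_prec :: "('i \<Rightarrow> 'a::euclidean_space) \<Rightarrow> 'i list \<Rightarrow> 'a \<Rightarrow> ('a \<Rightarrow> 'a) \<Rightarrow> 'a \<times> real \<Rightarrow> 'a \<times> real \<Rightarrow> bool" where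
  "aff_prec simple ws lm w0 \<beta> \<gamma> \<longleftrightarrow>
     fst (Phi lm w0 \<beta>) < fst (Phi lm w0 \<gamma>) \<or>
     (fst (Phi lm w0 \<beta>) = fst (Phi lm w0 \<gamma>) \<and> fin_succ simple ws (snd (Phi lm w0 \<beta>)) (snd (Phi lm w0 \<gamma>)))"

end

theory Submission
  imports Defs
begin

text \<open>
  Write \<open>\<lambda>\<^sub>- = w\<^sub>\<circ> \<lambda>\<close> and \<open>v = v(\<lambda>\<^sub>-)\<close>. The inversions of \<open>t(\<lambda>\<^sub>-)\<close> are the affine roots
  \<open>(\<alpha>\<^sup>\<or>, k)\<close> with \<open>0 < k \<le> \<langle>\<lambda>\<^sub>-, \<alpha>\<^sup>\<or>\<rangle>\<close>, so the first component of \<open>\<Phi>\<close> is nonnegative on them and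
  vanishes exactly on the \<open>M\<close> roots \<open>(w\<^sub>\<circ> \<beta>\<^sub>j\<^sup>\<or>, \<langle>\<lambda>, \<beta>\<^sub>j\<^sup>\<or>\<rangle>)\<close>, \<open>j \<le> M\<close>; here \<open>\<beta>\<^sub>1, \<dots>, \<beta>\<^sub>M\<close> are
  the positive roots not orthogonal to \<open>\<lambda>\<close>, because \<open>w\<^sub>\<circ> = v w\<^sub>\<circ>\<^sup>S\<close> splits the positive roots
  into the inversions of \<open>v\<close> and of \<open>w\<^sub>\<circ>\<^sup>S\<close>. Since the reduced word lists the inversions in
  \<open>\<prec>'\<close>-order, its first \<open>M\<close> letters produce exactly these roots, in the order of the \<open>\<beta>\<^sub>j\<close>.
  Computing \<open>t(\<lambda>\<^sub>-) \<beta>\<^sup>~\<^sub>k\<close> from the reduced word then shows, by induction on \<open>k\<close>, that \<open>u\<close> maps the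
  simple affine root \<open>\<alpha>\<^sub>\<ell>\<^sub>k\<close> to \<open>\<alpha>\<^sub>i\<^sub>k\<^sup>\<or>\<close>, i.e. \<open>u s\<^sub>\<ell>\<^sub>k = s\<^sub>i\<^sub>k u\<close>. Hence
  \<open>t(\<lambda>\<^sub>-) = v u s\<^sub>\<ell>\<^sub>M\<^sub>+\<^sub>1 \<cdots> s\<^sub>\<ell>\<^sub>L\<close>, and \<open>u s\<^sub>\<ell>\<^sub>M\<^sub>+\<^sub>1 \<cdots> s\<^sub>\<ell>\<^sub>L = v\<^sup>-\<^sup>1 t(\<lambda>\<^sub>-) = t(\<lambda>) v\<^sup>-\<^sup>1\<close>.

  Minimality is a count of affine inversions: for \<open>w \<in> W\<close>,
  \<open>\<ell>(t(\<lambda>) w) = \<langle>\<lambda>, 2\<rho>\<^sup>\<or>\<rangle> - #{\<alpha> > 0. \<langle>\<lambda>, (w \<alpha>)\<^sup>\<or>\<rangle> < 0} + #{\<alpha> > 0. \<langle>\<lambda>, w \<alpha>\<rangle> = 0, w \<alpha> < 0}\<close>.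
  The first set injects into the inversion set of \<open>v\<close> via \<open>-w\<close>, so \<open>\<ell>(t(\<lambda>) w) \<ge> \<langle>\<lambda>, 2\<rho>\<^sup>\<or>\<rangle> - M\<close>,
  with equality only if \<open>w\<close> has the sign pattern of \<open>v\<^sup>-\<^sup>1\<close>, which determines \<open>w = v\<^sup>-\<^sup>1\<close>.
\<close>

lemma coroot_nz: "a \<noteq> 0 \<Longrightarrow> coroot a \<noteq> 0"
  by (simp add: coroot_def)

lemma coroot_coroot: "a \<noteq> 0 \<Longrightarrow> coroot (coroot a) = a"
  by (simp add: coroot_def inner_commute power2_eq_square field_simps)

lemma inner_coroot_self: "a \<noteq> 0 \<Longrightarrow> a \<bullet> coroot a = 2"
  by (simp add: coroot_def)

lemma coroot_minus: "coroot (- a) = - coroot a"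
  by (simp add: coroot_def)

lemma coroot_inj: "a \<noteq> 0 \<Longrightarrow> b \<noteq> 0 \<Longrightarrow> coroot a = coroot b \<Longrightarrow> a = b"
  by (metis coroot_coroot)

lemma inner_coroot: "x \<bullet> coroot a = (2 / (a \<bullet> a)) * (x \<bullet> a)"
  by (simp add: coroot_def)

lemma inner_coroot_pos_iff: "a \<noteq> 0 \<Longrightarrow> x \<bullet> coroot a > 0 \<longleftrightarrow> x \<bullet> a > 0"
  using inner_ge_zero[of a] by (auto simp: inner_coroot zero_less_divide_iff simp del: inner_ge_zero)

lemma refl_refl: "a \<noteq> 0 \<Longrightarrow> refl a (refl a x) = x"
  by (simp add: refl_def coroot_def inner_diff_left algebra_simps inner_commute)

lemma refl_self: "a \<noteq> 0 \<Longrightarrow> refl a a = - a"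
  by (simp add: refl_def inner_coroot_self inner_commute scaleR_2)

lemma orthogonal_transformation_refl: "a \<noteq> 0 \<Longrightarrow> orthogonal_transformation (refl a)"
  unfolding orthogonal_transformation_def
proof
  show "linear (refl a)"
    by (rule linearI) (auto simp: refl_def inner_add_left algebra_simps)
  show "a \<noteq> 0 \<Longrightarrow> \<forall>x y. refl a x \<bullet> refl a y = x \<bullet> y"
    by (simp add: refl_def coroot_def inner_diff_left inner_diff_right algebra_simps inner_commute)
qed

lemma orthogonal_transformation_inner: "orthogonal_transformation v \<Longrightarrow> v x \<bullet> v y = x \<bullet> y"
  by (simp add: orthogonal_transformation_def)

lemma orthogonal_transformation_minus: "orthogonal_transformation v \<Longrightarrow> v (- x) = - v x"
  by (simp add: orthogonal_transformation_linear linear_neg)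

lemma orthogonal_transformation_diff: "orthogonal_transformation v \<Longrightarrow> v (x - y) = v x - v y"
  by (simp add: orthogonal_transformation_linear linear_diff)

lemma orthogonal_transformation_coroot: "orthogonal_transformation v \<Longrightarrow> coroot (v x) = v (coroot x)"
  by (simp add: coroot_def orthogonal_transformation_inner orthogonal_transformation_scaleR)

lemma orthogonal_transformation_injD: "orthogonal_transformation v \<Longrightarrow> v x = v y \<Longrightarrow> x = y"
  using orthogonal_transformation_inj by (metis injD)

lemma orthogonal_transformation_refl_conj: "orthogonal_transformation v \<Longrightarrow> v (refl a x) = refl (v a) (v x)"
  by (simp add: refl_def orthogonal_transformation_coroot orthogonal_transformation_diff
      orthogonal_transformation_scaleR orthogonal_transformation_inner)

lemma word_Nil [simp]: "word s [] = id"
  by (simp add: word_def)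

lemma word_Cons [simp]: "word s (i # ws) = refl (s i) \<circ> word s ws"
  by (simp add: word_def)

lemma word_append: "word s (xs @ ys) = word s xs \<circ> word s ys"
  by (induction xs) auto

lemma word_snoc: "word s (xs @ [i]) = word s xs \<circ> refl (s i)"
  by (simp add: word_append)

context
  fixes s :: "'i \<Rightarrow> 'a::euclidean_space"
  assumes s_nz: "\<And>i. s i \<noteq> 0"
begin

lemma orthogonal_transformation_word: "orthogonal_transformation (word s ws)"
proof (induction ws)
  case (Cons i ws)
  show ?case
    unfolding word_Cons by (rule orthogonal_transformation_compose[OF orthogonal_transformation_refl[OF s_nz] Cons.IH])
qed (simp add: id_def)

lemma word_rev_word: "word s (rev ws) (word s ws x) = x"
  by (induction ws arbitrary: x) (auto simp: word_append refl_refl s_nz)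

lemma word_word_rev: "word s ws (word s (rev ws) x) = x"
  using word_rev_word[of "rev ws"] by simp

lemma inner_word_left: "word s ws x \<bullet> y = x \<bullet> word s (rev ws) y"
  by (metis orthogonal_transformation_inner[OF orthogonal_transformation_word] word_word_rev)

lemma word_split_simple:
  "word s (A @ [x] @ D) (word s (rev D) (s x)) = - word s A (s x)"
  by (simp add: word_append word_word_rev refl_self s_nz
      orthogonal_transformation_minus[OF orthogonal_transformation_word])

end

section \<open>Finite root systems and Weyl groups\<close>

locale based_root_system =
  fixes R :: "'a::euclidean_space set" and simple :: "'i::finite \<Rightarrow> 'a"
  assumes root_system: "root_system R" and simple_system: "simple_system R simple"
begin

abbreviation pos :: "'a set" where "pos \<equiv> pos_roots R simple"

lemma finite_R: "finite R"
  using root_system by (simp add: root_system_def)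

lemma root_nz: "\<alpha> \<in> R \<Longrightarrow> \<alpha> \<noteq> 0"
  using root_system by (auto simp: root_system_def)

lemma refl_in_R: "\<alpha> \<in> R \<Longrightarrow> \<beta> \<in> R \<Longrightarrow> refl \<alpha> \<beta> \<in> R"
  using root_system by (simp add: root_system_def)

lemma multiple_in_R: "\<alpha> \<in> R \<Longrightarrow> c *\<^sub>R \<alpha> \<in> R \<Longrightarrow> c = 1 \<or> c = -1"
  using root_system by (simp add: root_system_def)

lemma uminus_in_R: "\<alpha> \<in> R \<Longrightarrow> - \<alpha> \<in> R"
  using refl_in_R[of \<alpha> \<alpha>] refl_self root_nz by force

lemma simple_in_R: "simple i \<in> R"
  using simple_system by (auto simp: simple_system_def)

lemma simple_nz: "simple i \<noteq> 0"
  using simple_in_R root_nz by blast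

lemma word_in_R: "\<alpha> \<in> R \<Longrightarrow> word simple ws \<alpha> \<in> R"
  by (induction ws) (auto intro: refl_in_R simple_in_R)

lemma orthogonal_word: "orthogonal_transformation (word simple ws)"
  using orthogonal_transformation_word simple_nz by blast

lemma pos_in_R: "\<alpha> \<in> pos \<Longrightarrow> \<alpha> \<in> R"
  by (simp add: pos_roots_def)

lemma pos_or_uminus_pos: "\<alpha> \<in> R \<Longrightarrow> \<alpha> \<in> pos \<or> - \<alpha> \<in> pos"
  using simple_system by (simp add: simple_system_def)

lemma finite_pos: "finite pos"
  using finite_R by (simp add: pos_roots_def)

lemma span_simple: "span (range simple) = UNIV"
proof -
  have "(\<Sum>i\<in>UNIV. c i *\<^sub>R simple i) \<in> span (range simple)" for c
    by (simp add: span_sum span_scale span_base)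
  then have "x \<in> span (range simple)" if "nonneg_comb simple x" for x
    using that unfolding nonneg_comb_def by auto
  then have "R \<subseteq> span (range simple)"
    using pos_or_uminus_pos span_neg by (fastforce simp: pos_roots_def)
  then have "span R \<subseteq> span (range simple)"
    by (simp add: span_minimal)
  then show ?thesis
    using root_system by (auto simp: root_system_def)
qed

lemma simple_sum_eq_0_iff: "(\<Sum>i\<in>UNIV. c i *\<^sub>R simple i) = 0 \<longleftrightarrow> c = (\<lambda>_. 0)"
proof
  assume sum0: "(\<Sum>i\<in>UNIV. c i *\<^sub>R simple i) = 0"
  have inj: "inj simple"
    using simple_system by (simp add: simple_system_def)
  define d where "d v = c (inv simple v)" for v
  have "(\<Sum>v\<in>range simple. d v *\<^sub>R v) = 0"
    using sum0 by (simp add: sum.reindex[OF inj] d_def inv_f_f[OF inj])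
  moreover have "independent (range simple)"
    using simple_system by (simp add: simple_system_def)
  ultimately have "\<forall>v\<in>range simple. d v = 0"
    using dependent_finite[of "range simple"] by auto
  then show "c = (\<lambda>_. 0)"
    by (auto simp: d_def inv_f_f[OF inj])
qed simp

definition coord :: "'a \<Rightarrow> 'i \<Rightarrow> real" where
  "coord x = (SOME c. x = (\<Sum>i\<in>UNIV. c i *\<^sub>R simple i))"

lemma coord_expansion: "x = (\<Sum>i\<in>UNIV. coord x i *\<^sub>R simple i)"
proof -
  obtain u where "x = (\<Sum>v\<in>range simple. u v *\<^sub>R v)"
    using span_simple span_finite[of "range simple"] by auto
  then have "x = (\<Sum>i\<in>UNIV. u (simple i) *\<^sub>R simple i)"
    using simple_system sum.reindex[of simple UNIV "\<lambda>v. u v *\<^sub>R v"] by (simp add: simple_system_def)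
  then show ?thesis
    unfolding coord_def by (rule someI[of "\<lambda>c. x = (\<Sum>i\<in>UNIV. c i *\<^sub>R simple i)"])
qed

lemma coord_unique: "x = (\<Sum>i\<in>UNIV. c i *\<^sub>R simple i) \<Longrightarrow> coord x = c"
  using coord_expansion[of x] simple_sum_eq_0_iff[of "\<lambda>i. coord x i - c i"]
  by (auto simp: scaleR_diff_left sum_subtractf fun_eq_iff)

lemma coord_add: "coord (x + y) = (\<lambda>i. coord x i + coord y i)"
  by (rule coord_unique)
    (simp add: scaleR_add_left sum.distrib flip: coord_expansion)

lemma coord_scaleR: "coord (a *\<^sub>R x) = (\<lambda>i. a * coord x i)"
proof (rule coord_unique)
  have "a *\<^sub>R x = a *\<^sub>R (\<Sum>i\<in>UNIV. coord x i *\<^sub>R simple i)"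
    by (simp flip: coord_expansion)
  then show "a *\<^sub>R x = (\<Sum>i\<in>UNIV. (a * coord x i) *\<^sub>R simple i)"
    by (simp add: scaleR_sum_right)
qed

lemma coord_uminus: "coord (- x) = (\<lambda>i. - coord x i)"
  using coord_scaleR[of "-1" x] by simp

lemma coord_diff: "coord (x - y) = (\<lambda>i. coord x i - coord y i)"
  using coord_add[of x "-y"] coord_uminus[of y] by simp

lemma sum_single_simple:
  "\<forall>j. j \<noteq> i \<longrightarrow> c j = 0 \<Longrightarrow> (\<Sum>j\<in>UNIV. c j *\<^sub>R simple j) = c i *\<^sub>R simple i"
  by (subst sum.remove[of UNIV i]) auto

lemma coord_simple: "coord (simple j) = (\<lambda>i. if i = j then 1 else 0)"
  by (rule coord_unique) (subst sum_single_simple[where i=j], auto)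

lemma coord_nonzero: "x \<noteq> 0 \<Longrightarrow> \<exists>i. coord x i \<noteq> 0"
  using coord_expansion[of x] by (metis (no_types, lifting) scale_zero_left sum.neutral)

lemma coord_pos_nonneg: "\<alpha> \<in> pos \<Longrightarrow> coord \<alpha> i \<ge> 0"
proof -
  assume "\<alpha> \<in> pos"
  then obtain c :: "'i \<Rightarrow> nat" where "\<alpha> = (\<Sum>i\<in>UNIV. real (c i) *\<^sub>R simple i)"
    by (auto simp: pos_roots_def nonneg_comb_def)
  then show ?thesis
    by (simp add: coord_unique)
qed

lemma inner_coord_expansion: "l \<bullet> \<alpha> = (\<Sum>i\<in>UNIV. coord \<alpha> i * (l \<bullet> simple i))"
  by (subst coord_expansion[of \<alpha>]) (simp add: inner_sum_right)

definition height :: "'a \<Rightarrow> real" where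
  "height x = (\<Sum>i\<in>UNIV. coord x i)"

lemma linear_height: "linear height"
  by (rule linearI) (simp_all add: height_def coord_add coord_scaleR sum.distrib sum_distrib_left)

lemma height_simple: "height (simple i) = 1"
  by (simp add: height_def coord_simple)

lemma height_linear_pos:
  assumes z: "linear z" and \<alpha>: "\<alpha> \<in> pos" and support: "\<And>i. coord \<alpha> i > 0 \<Longrightarrow> height (z (simple i)) > 0"
  shows "height (z \<alpha>) > 0"
proof -
  have terms_nonneg: "0 \<le> coord \<alpha> i * height (z (simple i))" for i
    using coord_pos_nonneg[OF \<alpha>, of i] support[of i] by (cases "coord \<alpha> i = 0") auto
  obtain i where "coord \<alpha> i \<noteq> 0"
    using coord_nonzero root_nz[OF pos_in_R[OF \<alpha>]] by blast
  then have "0 < coord \<alpha> i * height (z (simple i))"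
    using coord_pos_nonneg[OF \<alpha>, of i] support[of i] by simp
  then have "0 < (\<Sum>i\<in>UNIV. coord \<alpha> i * height (z (simple i)))"
    using terms_nonneg by (intro sum_pos2) auto
  also have "\<dots> = height (z \<alpha>)"
    by (subst (2) coord_expansion[of \<alpha>])
      (simp add: linear_sum[OF z] linear_scale[OF z] linear_sum[OF linear_height] linear_scale[OF linear_height])
  finally show ?thesis .
qed

lemma height_pos: "\<alpha> \<in> pos \<Longrightarrow> height \<alpha> > 0"
  using height_linear_pos[of id \<alpha>] by (simp add: height_simple linear_id)

lemma uminus_pos_notin: "\<alpha> \<in> pos \<Longrightarrow> - \<alpha> \<notin> pos"
  using height_pos[of \<alpha>] height_pos[of "- \<alpha>"] linear_neg[OF linear_height, of \<alpha>] by linarith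

lemma pos_iff_height: "\<alpha> \<in> R \<Longrightarrow> \<alpha> \<in> pos \<longleftrightarrow> height \<alpha> > 0"
  using pos_or_uminus_pos[of \<alpha>] height_pos[of \<alpha>] height_pos[of "- \<alpha>"] linear_neg[OF linear_height, of \<alpha>]
  by auto

lemma simple_pos: "simple i \<in> pos"
proof -
  have "simple i = (\<Sum>j\<in>UNIV. real (if j = i then 1 else 0::nat) *\<^sub>R simple j)"
    by (subst sum_single_simple[where i=i]) auto
  then have "nonneg_comb simple (simple i)"
    unfolding nonneg_comb_def by (rule exI[of _ "\<lambda>j. if j = i then 1 else 0"])
  then show ?thesis
    using simple_in_R by (simp add: pos_roots_def)
qed

lemma uminus_simple_notin_pos: "- simple i \<notin> pos"
  using simple_pos uminus_pos_notin by blast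

text \<open>The simple reflection \<open>s\<^sub>i\<close> permutes the positive roots other than \<open>\<alpha>\<^sub>i\<close>: such a root has a
  positive coordinate at some \<open>j \<noteq> i\<close>, and \<open>s\<^sub>i\<close> does not change that coordinate.\<close>

lemma refl_simple_pos:
  assumes \<alpha>: "\<alpha> \<in> pos" and ne: "\<alpha> \<noteq> simple i"
  shows "refl (simple i) \<alpha> \<in> pos"
proof -
  have \<alpha>R: "\<alpha> \<in> R"
    using \<alpha> pos_in_R by blast
  have "\<exists>j. j \<noteq> i \<and> coord \<alpha> j > 0"
  proof (rule ccontr)
    assume "\<not> ?thesis"
    then have "\<forall>j. j \<noteq> i \<longrightarrow> coord \<alpha> j = 0"
      using coord_pos_nonneg[OF \<alpha>] by (metis less_eq_real_def)
    then have \<alpha>_eq: "\<alpha> = coord \<alpha> i *\<^sub>R simple i"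
      using coord_expansion[of \<alpha>] sum_single_simple[where c="coord \<alpha>" and i=i] by simp
    then have "coord \<alpha> i = 1 \<or> coord \<alpha> i = -1"
      using multiple_in_R[OF simple_in_R] \<alpha>R by metis
    then have "coord \<alpha> i = 1"
      using coord_pos_nonneg[OF \<alpha>, of i] by auto
    then show False
      using \<alpha>_eq ne by simp
  qed
  then obtain j where j: "j \<noteq> i" "coord \<alpha> j > 0"
    by blast
  have "refl (simple i) \<alpha> = \<alpha> - (\<alpha> \<bullet> coroot (simple i)) *\<^sub>R simple i"
    by (simp add: refl_def)
  then have "coord (refl (simple i) \<alpha>) j = coord \<alpha> j"
    using j(1) by (simp add: coord_diff coord_scaleR coord_simple)
  then show ?thesis
    using pos_or_uminus_pos[OF refl_in_R[OF simple_in_R \<alpha>R]] coord_pos_nonneg[of "- refl (simple i) \<alpha>" j] j(2)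
    by (auto simp: coord_uminus)
qed

end


lemma fin_betas_snoc: "fin_betas s (ws @ [i]) = map (refl (s i)) (fin_betas s ws) @ [s i]"
  unfolding fin_betas_def
  by (auto simp: nth_append word_append)

lemma length_fin_betas[simp]: "length (fin_betas s ws) = length ws"
  by (simp add: fin_betas_def)

lemma strict_mono_self_map_eq_id:
  fixes f :: "nat \<Rightarrow> nat"
  assumes into: "\<And>i. i < n \<Longrightarrow> f i < n" and mono: "\<And>i j. i < j \<Longrightarrow> j < n \<Longrightarrow> f i < f j"
  shows "i < n \<Longrightarrow> f i = i"
proof -
  have ge: "i < n \<Longrightarrow> i \<le> f i" for i
  proof (induction i)
    case (Suc i)
    then show ?case
      using mono[of i "Suc i"] by simp
  qed simp
  have le: "k < n \<Longrightarrow> f (n - 1 - k) \<le> n - 1 - k" for k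
  proof (induction k)
    case 0
    then show ?case
      using into[of "n - 1"] by simp
  next
    case (Suc k)
    then have "f (n - 1 - Suc k) < f (n - 1 - k)"
      using mono[of "n - 1 - Suc k" "n - 1 - k"] by simp
    then show ?case
      using Suc by simp
  qed
  show "i < n \<Longrightarrow> f i = i"
    using ge[of i] le[of "n - 1 - i"] by simp
qed

context based_root_system begin

definition inversions :: "('a \<Rightarrow> 'a) \<Rightarrow> 'a set" where "inversions w = {\<alpha> \<in> pos. - w \<alpha> \<in> pos}"

lemma inversions_id [simp]: "inversions id = {}" "inversions (\<lambda>x. x) = {}"
  using uminus_pos_notin by (auto simp: inversions_def)

lemma finite_inversions: "finite (inversions w)"
  using finite_pos by (simp add: inversions_def)

lemma inversions_snoc_pos:
  assumes w: "orthogonal_transformation w" and p: "w (simple i) \<in> pos"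
  shows "inversions (w \<circ> refl (simple i)) = insert (simple i) (refl (simple i) ` inversions w)"
proof
  show "inversions (w \<circ> refl (simple i)) \<subseteq> insert (simple i) (refl (simple i) ` inversions w)"
  proof
    fix \<beta> assume b: "\<beta> \<in> inversions (w \<circ> refl (simple i))"
    show "\<beta> \<in> insert (simple i) (refl (simple i) ` inversions w)"
    proof (cases "\<beta> = simple i")
      case False
      hence "refl (simple i) \<beta> \<in> pos" using b refl_simple_pos by (auto simp: inversions_def)
      hence "refl (simple i) \<beta> \<in> inversions w" using b by (auto simp: inversions_def)
      moreover have "\<beta> = refl (simple i) (refl (simple i) \<beta>)" by (simp add: refl_refl simple_nz)
      ultimately show ?thesis by blast
    qed simp
  qed
  show "insert (simple i) (refl (simple i) ` inversions w) \<subseteq> inversions (w \<circ> refl (simple i))"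
  proof
    fix \<beta> assume b: "\<beta> \<in> insert (simple i) (refl (simple i) ` inversions w)"
    show "\<beta> \<in> inversions (w \<circ> refl (simple i))"
    proof (cases "\<beta> = simple i")
      case True
      thus ?thesis using p simple_pos by (simp add: inversions_def refl_self simple_nz orthogonal_transformation_minus[OF w])
    next
      case False
      then obtain \<gamma> where g: "\<gamma> \<in> inversions w" "\<beta> = refl (simple i) \<gamma>" using b by blast
      have "\<gamma> \<noteq> simple i" using g p uminus_pos_notin by (auto simp: inversions_def)
      hence "\<beta> \<in> pos" using g refl_simple_pos by (auto simp: inversions_def)
      thus ?thesis using g by (simp add: inversions_def refl_refl simple_nz)
    qed
  qed
qed

lemma inj_on_refl_simple: "inj_on (refl (simple i)) A"
  by (rule inj_onI) (metis refl_refl simple_nz)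

lemma card_inversions_snoc_pos:
  assumes w: "orthogonal_transformation w" and p: "w (simple i) \<in> pos"
  shows "card (inversions (w \<circ> refl (simple i))) = Suc (card (inversions w))"
proof -
  have "simple i \<notin> refl (simple i) ` inversions w"
  proof
    assume "simple i \<in> refl (simple i) ` inversions w"
    then obtain \<gamma> where "\<gamma> \<in> inversions w" "simple i = refl (simple i) \<gamma>" by blast
    hence "\<gamma> = - simple i" "\<gamma> \<in> pos" using refl_refl[OF simple_nz, of i \<gamma>] refl_self[OF simple_nz, of i]
      by (auto simp: inversions_def)
    thus False using uminus_simple_notin_pos by simp
  qed
  thus ?thesis using inversions_snoc_pos[OF w p] finite_inversions card_image[OF inj_on_refl_simple] by simp
qed

lemma card_inversions_snoc_neg:
  assumes w: "orthogonal_transformation w" and p: "- w (simple i) \<in> pos"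
  shows "Suc (card (inversions (w \<circ> refl (simple i)))) = card (inversions w)"
proof -
  have "orthogonal_transformation (w \<circ> refl (simple i))"
    using orthogonal_transformation_compose[OF w orthogonal_transformation_refl[OF simple_nz]] .
  moreover have "(w \<circ> refl (simple i)) (simple i) \<in> pos"
    using p by (simp add: refl_self simple_nz orthogonal_transformation_minus[OF w])
  moreover have "w \<circ> refl (simple i) \<circ> refl (simple i) = w"
    by (simp add: fun_eq_iff refl_refl simple_nz)
  ultimately show ?thesis
    using card_inversions_snoc_pos by metis
qed

lemma word_simple_pos_or_neg: "word simple ws (simple i) \<in> pos \<or> - word simple ws (simple i) \<in> pos"
  using pos_or_uminus_pos word_in_R simple_in_R by blast

lemma deletion:
  "- word simple ws (simple i) \<in> pos \<Longrightarrow>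
     \<exists>ws'. Suc (length ws') = length ws \<and> word simple ws' = word simple ws \<circ> refl (simple i)"
proof (induction ws)
  case Nil
  thus ?case using uminus_simple_notin_pos by simp
next
  case (Cons j rest)
  show ?case
  proof (cases "- word simple rest (simple i) \<in> pos")
    case True
    then obtain r' where "Suc (length r') = length rest" "word simple r' = word simple rest \<circ> refl (simple i)"
      using Cons.IH by blast
    thus ?thesis by (intro exI[of _ "j # r'"]) auto
  next
    case False
    hence gp: "word simple rest (simple i) \<in> pos" using word_simple_pos_or_neg by blast
    have "- refl (simple j) (word simple rest (simple i)) \<in> pos" using Cons.prems by simp
    hence eq: "word simple rest (simple i) = simple j"
      using refl_simple_pos[OF gp, of j] uminus_pos_notin by blast
    have "word simple rest = word simple (j # rest) \<circ> refl (simple i)"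
    proof
      fix x
      have "(word simple (j # rest) \<circ> refl (simple i)) x
          = refl (word simple rest (simple i)) (word simple rest (refl (simple i) x))"
        by (simp add: eq)
      also have "\<dots> = word simple rest (refl (simple i) (refl (simple i) x))"
        by (simp add: orthogonal_transformation_refl_conj[OF orthogonal_word])
      also have "\<dots> = word simple rest x" by (simp add: refl_refl simple_nz)
      finally show "word simple rest x = (word simple (j # rest) \<circ> refl (simple i)) x" by simp
    qed
    show ?thesis
    proof (intro exI conjI)
      show "Suc (length rest) = length (j # rest)" by simp
      show "word simple rest = word simple (j # rest) \<circ> refl (simple i)" by fact
    qed
  qed
qed

lemma wlen_le: "wlen simple (word simple ws) \<le> length ws"
  unfolding wlen_def by (rule Least_le) blast

lemma wlen_attained: "\<exists>ws'. length ws' = wlen simple (word simple ws) \<and> word simple ws' = word simple ws"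
  unfolding wlen_def by (rule LeastI[of _ "length ws"]) blast

lemma reduced_word_butlast: "reduced_word simple (ws @ [i]) \<Longrightarrow> reduced_word simple ws"
proof -
  assume r: "reduced_word simple (ws @ [i])"
  obtain ws' where ws': "length ws' = wlen simple (word simple ws)" "word simple ws' = word simple ws"
    using wlen_attained by blast
  have "word simple (ws' @ [i]) = word simple (ws @ [i])" using ws' by (simp add: word_append)
  hence "length (ws @ [i]) \<le> length (ws' @ [i])" using r wlen_le[of "ws' @ [i]"]
    by (simp add: reduced_word_def)
  thus ?thesis using ws' wlen_le[of ws] by (simp add: reduced_word_def)
qed

lemma reduced_word_snoc_pos: "reduced_word simple (ws @ [i]) \<Longrightarrow> word simple ws (simple i) \<in> pos"
proof (rule ccontr)
  assume r: "reduced_word simple (ws @ [i])" and n: "word simple ws (simple i) \<notin> pos"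
  hence "- word simple ws (simple i) \<in> pos" using word_simple_pos_or_neg by blast
  then obtain ws' where "Suc (length ws') = length ws" "word simple ws' = word simple (ws @ [i])"
    using deletion by (auto simp: word_snoc)
  thus False using r wlen_le[of ws'] by (simp add: reduced_word_def)
qed

lemma card_inversions_reduced: "reduced_word simple ws \<Longrightarrow> card (inversions (word simple ws)) = length ws"
proof (induction ws rule: rev_induct)
  case Nil
  show ?case by simp
next
  case (snoc i ws)
  show ?case
    by (simp only: word_snoc length_append_singleton card_inversions_snoc_pos[OF orthogonal_word reduced_word_snoc_pos[OF snoc.prems]]
        snoc.IH[OF reduced_word_butlast[OF snoc.prems]])
qed

lemma weyl_imp_word: "w \<in> weyl simple \<Longrightarrow> \<exists>ws. w = word simple ws"
  by (auto simp: weyl_def)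

lemma reduced_word_exists: "w \<in> weyl simple \<Longrightarrow> \<exists>ws. word simple ws = w \<and> reduced_word simple ws"
proof -
  assume "w \<in> weyl simple"
  then obtain ws0 where "w = word simple ws0" using weyl_imp_word by blast
  then obtain ws where ws: "length ws = wlen simple w" "word simple ws = w" using wlen_attained by blast
  thus ?thesis by (auto simp: reduced_word_def)
qed

lemma wlen_eq_card_inversions: "w \<in> weyl simple \<Longrightarrow> wlen simple w = card (inversions w)"
  using reduced_word_exists card_inversions_reduced by (metis reduced_word_def)

lemma word_in_weyl: "word simple ws \<in> weyl simple"
  by (auto simp: weyl_def)

lemma orthogonal_weyl: "w \<in> weyl simple \<Longrightarrow> orthogonal_transformation w"
  using weyl_imp_word orthogonal_word by blast

lemma weyl_comp: "v \<in> weyl simple \<Longrightarrow> w \<in> weyl simple \<Longrightarrow> v \<circ> w \<in> weyl simple"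
  by (auto simp: weyl_def word_append[symmetric])

lemma weyl_in_R: "w \<in> weyl simple \<Longrightarrow> \<alpha> \<in> R \<Longrightarrow> w \<alpha> \<in> R"
  using weyl_imp_word word_in_R by blast

lemma weyl_eq_id_if_pos_stable: "w \<in> weyl simple \<Longrightarrow> (\<forall>\<alpha>\<in>pos. w \<alpha> \<in> pos) \<Longrightarrow> w = id"
proof -
  assume w: "w \<in> weyl simple" and p: "\<forall>\<alpha>\<in>pos. w \<alpha> \<in> pos"
  have "inversions w = {}" using p uminus_pos_notin by (auto simp: inversions_def)
  hence "wlen simple w = 0" using wlen_eq_card_inversions[OF w] by simp
  then obtain ws where "word simple ws = w" "reduced_word simple ws" using reduced_word_exists[OF w] by blast
  thus ?thesis using \<open>wlen simple w = 0\<close> by (simp add: reduced_word_def)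
qed

lemma weyl_comp_refl_simple: "w \<in> weyl simple \<Longrightarrow> w \<circ> refl (simple i) \<in> weyl simple"
  using weyl_comp[OF _ word_in_weyl[of "[i]"]] by simp

lemma wlen_snoc_pos:
  "w \<in> weyl simple \<Longrightarrow> w (simple i) \<in> pos \<Longrightarrow> wlen simple (w \<circ> refl (simple i)) = Suc (wlen simple w)"
  by (simp add: wlen_eq_card_inversions weyl_comp_refl_simple card_inversions_snoc_pos orthogonal_weyl)

lemma wlen_snoc_neg:
  "w \<in> weyl simple \<Longrightarrow> - w (simple i) \<in> pos \<Longrightarrow> wlen simple (w \<circ> refl (simple i)) < wlen simple w"
  using card_inversions_snoc_neg[OF orthogonal_weyl]
  by (simp add: wlen_eq_card_inversions weyl_comp_refl_simple) (metis lessI)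

lemma set_fin_betas_reduced: "reduced_word simple ws \<Longrightarrow> set (fin_betas simple ws) = inversions (word simple ws)"
proof (induction ws rule: rev_induct)
  case Nil
  show ?case by (simp add: fin_betas_def)
next
  case (snoc i ws)
  show ?case
    by (simp only: word_snoc fin_betas_snoc inversions_snoc_pos[OF orthogonal_word reduced_word_snoc_pos[OF snoc.prems]]
        snoc.IH[OF reduced_word_butlast[OF snoc.prems], symmetric] set_append set_map) simp
qed

lemma distinct_fin_betas_reduced: "reduced_word simple ws \<Longrightarrow> distinct (fin_betas simple ws)"
  using set_fin_betas_reduced card_inversions_reduced card_distinct by (metis length_fin_betas)

lemma weyl_pos_if_simple_pos:
  assumes z: "z \<in> weyl simple" and \<alpha>: "\<alpha> \<in> pos" and support: "\<And>i. coord \<alpha> i > 0 \<Longrightarrow> z (simple i) \<in> pos"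
  shows "z \<alpha> \<in> pos"
proof -
  have "height (z \<alpha>) > 0"
    using height_linear_pos[OF orthogonal_transformation_linear[OF orthogonal_weyl[OF z]] \<alpha>] support height_pos
    by blast
  then show ?thesis
    using pos_iff_height weyl_in_R[OF z pos_in_R[OF \<alpha>]] by blast
qed

lemma weyl_neg_if_simple_neg:
  assumes z: "z \<in> weyl simple" and \<alpha>: "\<alpha> \<in> pos" and support: "\<And>i. coord \<alpha> i > 0 \<Longrightarrow> - z (simple i) \<in> pos"
  shows "- z \<alpha> \<in> pos"
proof -
  have "linear (\<lambda>x. - z x)"
    using orthogonal_transformation_linear[OF orthogonal_weyl[OF z]] by (simp add: linear_compose_neg)
  then have "height (- z \<alpha>) > 0"
    using height_linear_pos[OF _ \<alpha>] support height_pos by blast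
  then show ?thesis
    using pos_iff_height uminus_in_R weyl_in_R[OF z pos_in_R[OF \<alpha>]] by blast
qed

end

section \<open>Affine roots and lengths\<close>

lemma ext_elt_apply [simp]: "ext_elt v \<nu> (x, r) = (v x, r - \<nu> \<bullet> x)"
  by (simp add: ext_elt_def)

lemma transl_apply [simp]: "transl \<nu> (x, r) = (x, r - \<nu> \<bullet> x)"
  by (simp add: transl_def)

lemma ext_elt_uminus:
  "orthogonal_transformation v \<Longrightarrow> ext_elt v \<nu> (- p) = - ext_elt v \<nu> p"
  by (cases p) (simp add: orthogonal_transformation_minus)

lemma ext_elt_comp_zero: "ext_elt v 0 \<circ> ext_elt w 0 = ext_elt (v \<circ> w) 0"
  by (auto simp: fun_eq_iff ext_elt_def)

lemma ext_elt_zero_injD: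
  "orthogonal_transformation v \<Longrightarrow> ext_elt v 0 p = ext_elt v 0 q \<Longrightarrow> p = q"
  by (cases p; cases q) (auto dest: orthogonal_transformation_injD)

definition aff_reflection :: "'a::euclidean_space \<times> real \<Rightarrow> 'a \<times> real \<Rightarrow> 'a \<times> real" where
  "aff_reflection b p =
     (fst p - (fst p \<bullet> coroot (fst b)) *\<^sub>R fst b, snd p - (fst p \<bullet> coroot (fst b)) * snd b)"

lemma aff_reflection_self: "fst b \<noteq> 0 \<Longrightarrow> aff_reflection b b = - b"
  by (cases b) (simp add: aff_reflection_def inner_coroot_self scaleR_2 algebra_simps)

lemma aff_reflection_aff_reflection: "fst b \<noteq> 0 \<Longrightarrow> aff_reflection b (aff_reflection b p) = p"
  by (cases b; cases p) (simp add: aff_reflection_def inner_diff_left inner_coroot_self algebra_simps)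

lemma ext_elt_aff_reflection:
  assumes v: "orthogonal_transformation v"
  shows "ext_elt v \<nu> (aff_reflection b p) = aff_reflection (ext_elt v \<nu> b) (ext_elt v \<nu> p)"
proof (cases b; cases p)
  fix y c x r assume b: "b = (y, c)" and p: "p = (x, r)"
  have "v x \<bullet> coroot (v y) = x \<bullet> coroot y"
    by (simp add: orthogonal_transformation_coroot[OF v] orthogonal_transformation_inner[OF v])
  then show ?thesis
    unfolding b p aff_reflection_def
    by (simp add: orthogonal_transformation_diff[OF v] orthogonal_transformation_scaleR[OF v]
        inner_diff_right algebra_simps)
qed

lemma aword_Nil [simp]: "aword s \<phi> [] = id"
  by (simp add: aword_def)

lemma aword_Cons [simp]: "aword s \<phi> (j # l) = aff_refl s \<phi> j \<circ> aword s \<phi> l"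
  by (simp add: aword_def)

lemma aword_append: "aword s \<phi> (a @ b) = aword s \<phi> a \<circ> aword s \<phi> b"
  by (induction a) auto

context
  fixes s :: "'i \<Rightarrow> 'a::euclidean_space" and \<phi> :: 'a
  assumes s_nz: "\<And>i. s i \<noteq> 0" and \<phi>_nz: "\<phi> \<noteq> 0"
begin

lemma aff_refl_eq_aff_reflection: "aff_refl s \<phi> j = aff_reflection (aff_simple_root s \<phi> j)"
proof
  have swap: "(x \<bullet> a) *\<^sub>R coroot a = (x \<bullet> coroot a) *\<^sub>R a" for x a :: 'a
    by (simp add: coroot_def)
  show "aff_refl s \<phi> j p = aff_reflection (aff_simple_root s \<phi> j) p" for p
    using s_nz \<phi>_nz
    by (cases j; cases p) (simp_all add: aff_refl_def aff_simple_root_def aff_reflection_def refl_def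
        coroot_minus coroot_coroot swap inner_commute)
qed

lemma fst_aff_simple_root_nz: "fst (aff_simple_root s \<phi> j) \<noteq> 0"
  using s_nz \<phi>_nz by (cases j) (auto simp: aff_simple_root_def coroot_nz)

lemma aff_refl_aff_refl: "aff_refl s \<phi> j (aff_refl s \<phi> j p) = p"
  by (simp add: aff_refl_eq_aff_reflection aff_reflection_aff_reflection fst_aff_simple_root_nz)

lemma aff_refl_aff_simple_root: "aff_refl s \<phi> j (aff_simple_root s \<phi> j) = - aff_simple_root s \<phi> j"
  by (simp add: aff_refl_eq_aff_reflection aff_reflection_self fst_aff_simple_root_nz)

lemma aff_refl_uminus: "aff_refl s \<phi> j (- p) = - aff_refl s \<phi> j p"
  using s_nz \<phi>_nz
  by (cases j) (auto simp: aff_refl_def intro!: ext_elt_uminus orthogonal_transformation_refl)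

lemma aword_uminus: "aword s \<phi> l (- p) = - aword s \<phi> l p"
  by (induction l arbitrary: p) (auto simp: aff_refl_uminus)

lemma aword_aword_rev: "aword s \<phi> l (aword s \<phi> (rev l) p) = p"
  by (induction l arbitrary: p rule: rev_induct) (simp_all add: aword_append aff_refl_aff_refl)

lemma aword_split_simple:
  "aword s \<phi> (A @ [x] @ D) (aword s \<phi> (rev D) (aff_simple_root s \<phi> x)) = - aword s \<phi> A (aff_simple_root s \<phi> x)"
  by (simp add: aword_append aword_aword_rev aff_refl_aff_simple_root aword_uminus)

end

lemma card_int_interval_end: "card {k::int. lo \<le> k \<and> (k < n \<or> k = n \<and> Q)} = nat (n - lo) + (if Q \<and> lo \<le> n then 1 else 0)"
proof (cases "Q \<and> lo \<le> n")
  case True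
  hence "{k::int. lo \<le> k \<and> (k < n \<or> k = n \<and> Q)} = {lo..n}" by auto
  moreover have "nat (n - lo + 1) = nat (n - lo) + 1" using True by (simp add: nat_add_distrib)
  ultimately show ?thesis using True by simp
next
  case False
  hence "{k::int. lo \<le> k \<and> (k < n \<or> k = n \<and> Q)} = {lo..<n}" by auto
  thus ?thesis using False by simp
qed

context based_root_system begin

lemma aff_pos_iff:
  assumes a: "\<alpha> \<in> R"
  shows "(coroot \<alpha>, of_int k) \<in> aff_pos R simple \<longleftrightarrow> (k > 0 \<or> k = 0 \<and> \<alpha> \<in> pos)"
proof
  assume "(coroot \<alpha>, of_int k) \<in> aff_pos R simple"
  then obtain \<alpha>' k' where e: "(coroot \<alpha>, (of_int k :: real)) = (coroot \<alpha>', of_int k')" "\<alpha>' \<in> R"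
      "k' > 0 \<or> (k' = 0 \<and> \<alpha>' \<in> pos)"
    by (auto simp: aff_pos_def pos_roots_def)
  hence "\<alpha>' = \<alpha>" "k' = k" using coroot_inj root_nz a by auto
  thus "k > 0 \<or> k = 0 \<and> \<alpha> \<in> pos" using e(3) by simp
next
  assume "k > 0 \<or> k = 0 \<and> \<alpha> \<in> pos"
  thus "(coroot \<alpha>, of_int k) \<in> aff_pos R simple" using a by (auto simp: aff_pos_def pos_roots_def)
qed

lemma aff_neg_iff:
  assumes a: "\<alpha> \<in> R"
  shows "(coroot \<alpha>, of_int k) \<in> aff_neg R simple \<longleftrightarrow> (- k > 0 \<or> k = 0 \<and> - \<alpha> \<in> pos)"
proof -
  have "(coroot \<alpha>, of_int k) \<in> aff_neg R simple \<longleftrightarrow> - (coroot \<alpha>, of_int k) \<in> aff_pos R simple"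
    unfolding aff_neg_def using image_eqI[of "(coroot \<alpha>, of_int k)" uminus "- (coroot \<alpha>, of_int k)"] by auto
  also have "- (coroot \<alpha>, (of_int k :: real)) = (coroot (- \<alpha>), of_int (- k))" by (simp add: coroot_minus)
  also have "\<dots> \<in> aff_pos R simple \<longleftrightarrow> (- k > 0 \<or> - k = 0 \<and> - \<alpha> \<in> pos)"
    by (rule aff_pos_iff[OF uminus_in_R[OF a]])
  finally show ?thesis by simp
qed

lemma R_eq_pos_Un_uminus_pos: "R = pos \<union> uminus ` pos"
proof
  show "R \<subseteq> pos \<union> uminus ` pos"
  proof
    fix a assume "a \<in> R"
    hence "a \<in> pos \<or> - a \<in> pos" using pos_or_uminus_pos by blast
    thus "a \<in> pos \<union> uminus ` pos" using image_eqI[of a uminus "- a" pos] by auto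
  qed
  show "pos \<union> uminus ` pos \<subseteq> R" using pos_in_R uminus_in_R by auto
qed

lemma sum_R_eq_sum_pos: "(\<Sum>a\<in>R. f a) = (\<Sum>a\<in>pos. f a) + (\<Sum>a\<in>pos. f (- a))"
proof -
  have d: "pos \<inter> uminus ` pos = {}" using uminus_pos_notin by auto
  have "(\<Sum>a\<in>R. f a) = (\<Sum>a\<in>pos \<union> uminus ` pos. f a)" by (rule arg_cong[OF R_eq_pos_Un_uminus_pos])
  also have "\<dots> = (\<Sum>a\<in>pos. f a) + (\<Sum>a\<in>uminus ` pos. f a)"
    by (rule sum.union_disjoint) (use finite_pos d in auto)
  also have "(\<Sum>a\<in>uminus ` pos. f a) = (\<Sum>a\<in>pos. f (- a))"
    by (subst sum.reindex) (auto simp: inj_on_def)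
  finally show ?thesis .
qed

text \<open>The affine roots \<open>(\<beta>\<^sup>\<or>, k)\<close> over a fixed finite root \<open>\<beta>\<close> that are made negative by
  \<open>(x, r) \<mapsto> (w x, r - h x)\<close> are those whose level \<open>k\<close> lies in this interval.\<close>

definition inversion_levels :: "('a \<Rightarrow> 'a) \<Rightarrow> ('a \<Rightarrow> real) \<Rightarrow> 'a \<Rightarrow> int set" where
  "inversion_levels w h \<beta> =
     {k. (if \<beta> \<in> pos then 0 else 1) \<le> k \<and>
         (k < \<lfloor>h (coroot \<beta>)\<rfloor> \<or> k = \<lfloor>h (coroot \<beta>)\<rfloor> \<and> - w \<beta> \<in> pos)}"

lemma finite_inversion_levels: "finite (inversion_levels w h \<beta>)"
  by (rule finite_subset[of _ "{0..\<lfloor>h (coroot \<beta>)\<rfloor>}"]) (auto simp: inversion_levels_def split: if_splits)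

lemma aff_inversions_eq_Sigma:
  assumes w: "w \<in> weyl simple" and h_Ints: "\<forall>\<alpha>\<in>R. h (coroot \<alpha>) \<in> \<int>"
    and y: "\<forall>x r. y (x, r) = (w x, r - h x)"
  shows "{p \<in> aff_pos R simple. y p \<in> aff_neg R simple} =
    (\<lambda>(\<beta>, k). (coroot \<beta>, of_int k)) ` (SIGMA \<beta>:R. inversion_levels w h \<beta>)"
proof -
  have y_root: "y (coroot \<beta>, of_int k) = (coroot (w \<beta>), of_int (k - \<lfloor>h (coroot \<beta>)\<rfloor>))"
    if "\<beta> \<in> R" for \<beta> k
    using that y h_Ints by (simp add: orthogonal_transformation_coroot[OF orthogonal_weyl[OF w]])
  have "(coroot \<beta>, of_int k) \<in> aff_pos R simple \<and> y (coroot \<beta>, of_int k) \<in> aff_neg R simple \<longleftrightarrow>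
        k \<in> inversion_levels w h \<beta>" if \<beta>: "\<beta> \<in> R" for \<beta> k
  proof -
    obtain n where "h (coroot \<beta>) = of_int n"
      using h_Ints \<beta> by (auto elim!: Ints_cases)
    then show ?thesis
      unfolding y_root[OF \<beta>] aff_pos_iff[OF \<beta>] aff_neg_iff[OF weyl_in_R[OF w \<beta>]] inversion_levels_def
      by auto
  qed
  moreover have "p \<in> aff_pos R simple \<Longrightarrow> \<exists>\<beta> k. \<beta> \<in> R \<and> p = (coroot \<beta>, of_int k)" for p
    by (auto simp: aff_pos_def)
  ultimately show ?thesis
    by (auto simp: image_iff) metis
qed

lemma alen_eq_sum_card_inversion_levels:
  assumes w: "w \<in> weyl simple" and h_Ints: "\<forall>\<alpha>\<in>R. h (coroot \<alpha>) \<in> \<int>"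
    and y: "\<forall>x r. y (x, r) = (w x, r - h x)"
  shows "alen R simple y = (\<Sum>\<beta>\<in>R. card (inversion_levels w h \<beta>))"
proof -
  have "inj_on (\<lambda>(\<beta>, k). (coroot \<beta>, real_of_int k)) (SIGMA \<beta>:R. inversion_levels w h \<beta>)"
    by (rule inj_onI) (auto dest: coroot_inj[OF root_nz root_nz])
  then have "alen R simple y = card (SIGMA \<beta>:R. inversion_levels w h \<beta>)"
    unfolding alen_def aff_inversions_eq_Sigma[OF assms] by (rule card_image)
  then show ?thesis
    using card_SigmaI[of R] finite_R finite_inversion_levels by simp
qed

lemma alen_formula:
  assumes w: "w \<in> weyl simple" and h_Ints: "\<forall>\<alpha>\<in>R. h (coroot \<alpha>) \<in> \<int>" and h_uminus: "\<forall>x. h (- x) = - h x"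
    and y: "\<forall>x r. y (x, r) = (w x, r - h x)"
  shows "alen R simple y = (\<Sum>\<alpha>\<in>pos. nat \<lfloor>h (coroot \<alpha>)\<rfloor>
      + (if - w \<alpha> \<in> pos \<and> 0 \<le> \<lfloor>h (coroot \<alpha>)\<rfloor> then 1 else 0)
      + nat (- \<lfloor>h (coroot \<alpha>)\<rfloor> - 1)
      + (if w \<alpha> \<in> pos \<and> 1 \<le> - \<lfloor>h (coroot \<alpha>)\<rfloor> then 1 else 0))"
  unfolding alen_eq_sum_card_inversion_levels[OF assms(1,2,4)] sum_R_eq_sum_pos sum.distrib[symmetric]
proof (rule sum.cong[OF refl])
  fix \<alpha> assume \<alpha>: "\<alpha> \<in> pos"
  have "\<lfloor>h (coroot (- \<alpha>))\<rfloor> = - \<lfloor>h (coroot \<alpha>)\<rfloor>"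
    using h_Ints pos_in_R[OF \<alpha>] by (auto simp: coroot_minus h_uminus elim!: Ints_cases)
  then show "card (inversion_levels w h \<alpha>) + card (inversion_levels w h (- \<alpha>)) = nat \<lfloor>h (coroot \<alpha>)\<rfloor>
      + (if - w \<alpha> \<in> pos \<and> 0 \<le> \<lfloor>h (coroot \<alpha>)\<rfloor> then 1 else 0)
      + nat (- \<lfloor>h (coroot \<alpha>)\<rfloor> - 1)
      + (if w \<alpha> \<in> pos \<and> 1 \<le> - \<lfloor>h (coroot \<alpha>)\<rfloor> then 1 else 0)"
    using \<alpha> uminus_pos_notin[OF \<alpha>]
    by (simp add: inversion_levels_def card_int_interval_end orthogonal_transformation_minus[OF orthogonal_weyl[OF w]])
qed

lemma sum_pos_weyl_even:
  assumes w: "w \<in> weyl simple" and even: "\<And>x. x \<in> R \<Longrightarrow> F (- x) = F x"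
  shows "(\<Sum>\<alpha>\<in>pos. F (w \<alpha>)) = (\<Sum>\<alpha>\<in>pos. F \<alpha>)"
proof -
  have o: "orthogonal_transformation w"
    using orthogonal_weyl[OF w] .
  define \<pi> where "\<pi> \<alpha> = (if w \<alpha> \<in> pos then w \<alpha> else - w \<alpha>)" for \<alpha>
  have into: "\<pi> ` pos \<subseteq> pos"
    using pos_or_uminus_pos[OF weyl_in_R[OF w pos_in_R]] by (auto simp: \<pi>_def)
  have inj: "inj_on \<pi> pos"
  proof (rule inj_onI)
    fix a b assume a: "a \<in> pos" and b: "b \<in> pos" and "\<pi> a = \<pi> b"
    then have "w a = w b \<or> w a = w (- b)"
      by (auto simp: \<pi>_def orthogonal_transformation_minus[OF o] split: if_splits; metis minus_minus)
    then have "a = b \<or> a = - b"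
      using orthogonal_transformation_injD[OF o] by blast
    then show "a = b"
      using a b uminus_pos_notin by blast
  qed
  have "(\<Sum>\<alpha>\<in>pos. F (w \<alpha>)) = (\<Sum>\<alpha>\<in>pos. F (\<pi> \<alpha>))"
    by (rule sum.cong) (auto simp: \<pi>_def even weyl_in_R[OF w pos_in_R])
  also have "\<dots> = (\<Sum>\<alpha>\<in>\<pi> ` pos. F \<alpha>)"
    by (simp add: sum.reindex[OF inj])
  also have "\<pi> ` pos = pos"
    using endo_inj_surj[OF finite_pos into inj] .
  finally show ?thesis .
qed

end


lemma sum_if_card: "finite A \<Longrightarrow> (\<Sum>a\<in>A. if P a then 1 else 0 :: int) = int (card {a\<in>A. P a})"
  by (simp add: sum.inter_filter[symmetric])

section \<open>Dominant weights and the parabolic factorization\<close>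

locale dominant_weight = based_root_system R simple
  for R :: "'a::euclidean_space set" and simple :: "'i::finite \<Rightarrow> 'a" +
  fixes lam :: 'a
  assumes dominant: "lam \<in> dominant_weights R simple"
begin

lemma lam_coroot_Ints: "\<alpha> \<in> R \<Longrightarrow> lam \<bullet> coroot \<alpha> \<in> \<int>"
  using dominant by (auto simp: dominant_weights_def weights_def)

lemma lam_inner_simple_nonneg: "lam \<bullet> simple i \<ge> 0"
proof -
  have "lam \<bullet> coroot (simple i) \<ge> 0"
    using dominant by (auto simp: dominant_weights_def)
  moreover have "simple i \<bullet> simple i > 0"
    using simple_nz by simp
  ultimately show ?thesis
    by (simp add: inner_coroot zero_le_divide_iff)
qed

lemma lam_coroot_simple_eq_0_iff: "lam \<bullet> coroot (simple i) = 0 \<longleftrightarrow> lam \<bullet> simple i = 0"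
  using simple_nz[of i] by (simp add: inner_coroot)

lemma lam_inner_pos_nonneg: "\<alpha> \<in> pos \<Longrightarrow> lam \<bullet> \<alpha> \<ge> 0"
  by (subst inner_coord_expansion) (auto intro!: sum_nonneg simp: coord_pos_nonneg lam_inner_simple_nonneg)

lemma lam_inner_neg_nonpos: "- \<alpha> \<in> pos \<Longrightarrow> lam \<bullet> \<alpha> \<le> 0"
  using lam_inner_pos_nonneg[of "- \<alpha>"] by simp

lemma pos_if_lam_inner_pos: "\<alpha> \<in> R \<Longrightarrow> lam \<bullet> \<alpha> > 0 \<Longrightarrow> \<alpha> \<in> pos"
  using pos_or_uminus_pos lam_inner_neg_nonpos by fastforce

lemma neg_if_lam_inner_neg: "\<alpha> \<in> R \<Longrightarrow> lam \<bullet> \<alpha> < 0 \<Longrightarrow> - \<alpha> \<in> pos"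
  using pos_or_uminus_pos lam_inner_pos_nonneg by fastforce

lemma lam_inner_simple_eq_0:
  assumes \<alpha>: "\<alpha> \<in> pos" "lam \<bullet> \<alpha> = 0" and i: "coord \<alpha> i > 0"
  shows "lam \<bullet> simple i = 0"
proof -
  have terms_nonneg: "j \<in> UNIV \<Longrightarrow> 0 \<le> coord \<alpha> j * (lam \<bullet> simple j)" for j
    by (rule mult_nonneg_nonneg[OF coord_pos_nonneg[OF \<alpha>(1)] lam_inner_simple_nonneg])
  have "(\<Sum>j\<in>UNIV. coord \<alpha> j * (lam \<bullet> simple j)) = 0"
    using \<alpha>(2) by (simp add: inner_coord_expansion[symmetric])
  then have "\<forall>j\<in>UNIV. coord \<alpha> j * (lam \<bullet> simple j) = 0"
    using sum_nonneg_eq_0_iff[of UNIV "\<lambda>j. coord \<alpha> j * (lam \<bullet> simple j)"] terms_nonneg by simp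
  then have "coord \<alpha> i * (lam \<bullet> simple i) = 0"
    by blast
  then show ?thesis
    using i by simp
qed

definition lam_pairing :: "'a \<Rightarrow> int" where
  "lam_pairing \<beta> = \<lfloor>lam \<bullet> coroot \<beta>\<rfloor>"

lemma of_int_lam_pairing: "\<beta> \<in> R \<Longrightarrow> of_int (lam_pairing \<beta>) = lam \<bullet> coroot \<beta>"
  by (simp add: lam_pairing_def lam_coroot_Ints)

lemma lam_pairing_uminus: "\<beta> \<in> R \<Longrightarrow> lam_pairing (- \<beta>) = - lam_pairing \<beta>"
  using of_int_lam_pairing[of \<beta>] of_int_lam_pairing[OF uminus_in_R, of \<beta>]
  by (simp add: coroot_minus)

lemma lam_pairing_pos_iff: "\<beta> \<in> R \<Longrightarrow> lam_pairing \<beta> > 0 \<longleftrightarrow> lam \<bullet> \<beta> > 0"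
  using of_int_lam_pairing[of \<beta>] inner_coroot_pos_iff[OF root_nz, of \<beta> lam] by force

lemma lam_pairing_neg_iff: "\<beta> \<in> R \<Longrightarrow> lam_pairing \<beta> < 0 \<longleftrightarrow> lam \<bullet> \<beta> < 0"
  using lam_pairing_pos_iff[OF uminus_in_R, of \<beta>] by (simp add: lam_pairing_uminus)

lemma lam_pairing_eq_0_iff: "\<beta> \<in> R \<Longrightarrow> lam_pairing \<beta> = 0 \<longleftrightarrow> lam \<bullet> \<beta> = 0"
  using lam_pairing_pos_iff[of \<beta>] lam_pairing_neg_iff[of \<beta>] by (smt (verit))

lemma lam_pairing_pos_nonneg: "\<beta> \<in> pos \<Longrightarrow> lam_pairing \<beta> \<ge> 0"
  using lam_pairing_neg_iff[OF pos_in_R] lam_inner_pos_nonneg by (meson not_le)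

text \<open>\<open>\<langle>\<lambda>, 2\<rho>\<^sup>\<or>\<rangle>\<close>, the length of \<open>t(\<lambda>)\<close>.\<close>

abbreviation two_rho_pairing :: int where
  "two_rho_pairing \<equiv> \<Sum>\<alpha>\<in>pos. lam_pairing \<alpha>"

lemma sum_abs_lam_pairing_weyl:
  "w \<in> weyl simple \<Longrightarrow> (\<Sum>\<alpha>\<in>pos. \<bar>lam_pairing (w \<alpha>)\<bar>) = two_rho_pairing"
  using sum_pos_weyl_even[of w "\<lambda>\<alpha>. \<bar>lam_pairing \<alpha>\<bar>"] lam_pairing_uminus lam_pairing_pos_nonneg by simp

lemma alen_transl_comp:
  assumes w: "w \<in> weyl simple"
  shows "int (alen R simple (transl lam \<circ> ext_elt w 0)) =
    (\<Sum>\<alpha>\<in>pos. \<bar>lam_pairing (w \<alpha>)\<bar> - (if lam_pairing (w \<alpha>) < 0 then 1 else 0)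
       + (if lam_pairing (w \<alpha>) = 0 \<and> - w \<alpha> \<in> pos then 1 else 0))"
proof -
  have o: "orthogonal_transformation w"
    using orthogonal_weyl[OF w] .
  have pairing: "\<lfloor>lam \<bullet> w (coroot \<alpha>)\<rfloor> = lam_pairing (w \<alpha>)" for \<alpha>
    by (simp add: lam_pairing_def orthogonal_transformation_coroot[OF o])
  have formula: "alen R simple (transl lam \<circ> ext_elt w 0) = (\<Sum>\<alpha>\<in>pos. nat \<lfloor>lam \<bullet> w (coroot \<alpha>)\<rfloor>
      + (if - w \<alpha> \<in> pos \<and> 0 \<le> \<lfloor>lam \<bullet> w (coroot \<alpha>)\<rfloor> then 1 else 0)
      + nat (- \<lfloor>lam \<bullet> w (coroot \<alpha>)\<rfloor> - 1)
      + (if w \<alpha> \<in> pos \<and> 1 \<le> - \<lfloor>lam \<bullet> w (coroot \<alpha>)\<rfloor> then 1 else 0))"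
  proof (rule alen_formula[OF w])
    show "\<forall>\<alpha>\<in>R. lam \<bullet> w (coroot \<alpha>) \<in> \<int>"
      using lam_coroot_Ints weyl_in_R[OF w] by (simp add: orthogonal_transformation_coroot[OF o, symmetric])
    show "\<forall>x. lam \<bullet> w (- x) = - (lam \<bullet> w x)"
      by (simp add: orthogonal_transformation_minus[OF o])
    show "\<forall>x r. (transl lam \<circ> ext_elt w 0) (x, r) = (w x, r - lam \<bullet> w x)"
      by simp
  qed
  show ?thesis
    unfolding formula of_nat_sum pairing
  proof (rule sum.cong[OF refl])
    fix \<alpha> assume "\<alpha> \<in> pos"
    then have wR: "w \<alpha> \<in> R"
      using weyl_in_R[OF w pos_in_R] by blast
    have "w \<alpha> \<in> pos \<longleftrightarrow> - w \<alpha> \<notin> pos"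
      using pos_or_uminus_pos[OF wR] uminus_pos_notin by blast
    moreover have "lam_pairing (w \<alpha>) > 0 \<Longrightarrow> w \<alpha> \<in> pos"
      using lam_pairing_pos_iff[OF wR] pos_if_lam_inner_pos[OF wR] by blast
    moreover have "lam_pairing (w \<alpha>) < 0 \<Longrightarrow> - w \<alpha> \<in> pos"
      using lam_pairing_neg_iff[OF wR] neg_if_lam_inner_neg[OF wR] by blast
    ultimately show "int (nat (lam_pairing (w \<alpha>))
      + (if - w \<alpha> \<in> pos \<and> 0 \<le> lam_pairing (w \<alpha>) then 1 else 0)
      + nat (- lam_pairing (w \<alpha>) - 1)
      + (if w \<alpha> \<in> pos \<and> 1 \<le> - lam_pairing (w \<alpha>) then 1 else 0)) =
      \<bar>lam_pairing (w \<alpha>)\<bar> - (if lam_pairing (w \<alpha>) < 0 then 1 else 0)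
       + (if lam_pairing (w \<alpha>) = 0 \<and> - w \<alpha> \<in> pos then 1 else 0)"
      by (cases "lam_pairing (w \<alpha>) > 0"; cases "lam_pairing (w \<alpha>) < 0") auto
  qed
qed

lemma alen_transl_comp_card:
  assumes w: "w \<in> weyl simple"
  shows "int (alen R simple (transl lam \<circ> ext_elt w 0)) = two_rho_pairing
    - int (card {\<alpha> \<in> pos. lam_pairing (w \<alpha>) < 0})
    + int (card {\<alpha> \<in> pos. lam_pairing (w \<alpha>) = 0 \<and> - w \<alpha> \<in> pos})"
  unfolding alen_transl_comp[OF w] sum_abs_lam_pairing_weyl[OF w, symmetric]
  by (simp add: sum.distrib sum_subtractf sum_if_card[OF finite_pos])

end

locale longest_element = based_root_system R simple
  for R :: "'a::euclidean_space set" and simple :: "'i::finite \<Rightarrow> 'a" +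
  fixes w0 :: "'a \<Rightarrow> 'a"
  assumes longest: "is_longest simple (weyl simple) w0"
begin

lemma w0_in_weyl: "w0 \<in> weyl simple"
  using longest by (simp add: is_longest_def)

lemma w0_simple_neg: "- w0 (simple i) \<in> pos"
proof (rule ccontr)
  assume "\<not> ?thesis"
  then have "w0 (simple i) \<in> pos"
    using pos_or_uminus_pos[OF weyl_in_R[OF w0_in_weyl simple_in_R]] by blast
  then have "wlen simple (w0 \<circ> refl (simple i)) > wlen simple w0"
    by (simp add: wlen_snoc_pos[OF w0_in_weyl])
  then show False
    using longest weyl_comp_refl_simple[OF w0_in_weyl, of i] unfolding is_longest_def by (meson not_le)
qed

lemma w0_pos_neg: "\<alpha> \<in> pos \<Longrightarrow> - w0 \<alpha> \<in> pos"
  by (rule weyl_neg_if_simple_neg[OF w0_in_weyl]) (simp_all add: w0_simple_neg)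

lemma orthogonal_w0: "orthogonal_transformation w0"
  using orthogonal_weyl[OF w0_in_weyl] .

lemma w0_w0: "w0 (w0 x) = x"
proof -
  have comp_self: "w0 \<circ> w0 = id"
  proof (rule weyl_eq_id_if_pos_stable)
    show "w0 \<circ> w0 \<in> weyl simple"
      using weyl_comp[OF w0_in_weyl w0_in_weyl] .
    show "\<forall>\<alpha>\<in>pos. (w0 \<circ> w0) \<alpha> \<in> pos"
    proof
      fix \<alpha> assume "\<alpha> \<in> pos"
      then have "- w0 (- w0 \<alpha>) \<in> pos"
        by (intro w0_pos_neg)
      then show "(w0 \<circ> w0) \<alpha> \<in> pos"
        by (simp add: orthogonal_transformation_minus[OF orthogonal_w0])
    qed
  qed
  have "(w0 \<circ> w0) x = id x"
    by (simp only: comp_self)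
  then show ?thesis
    by simp
qed

lemma inner_w0_left: "w0 x \<bullet> y = x \<bullet> w0 y"
proof -
  have "w0 x \<bullet> y = w0 x \<bullet> w0 (w0 y)"
    by (simp add: w0_w0)
  also have "\<dots> = x \<bullet> w0 y"
    by (rule orthogonal_transformation_inner[OF orthogonal_w0])
  finally show ?thesis .
qed

lemma w0_in_R: "\<alpha> \<in> R \<Longrightarrow> w0 \<alpha> \<in> R"
  using weyl_in_R[OF w0_in_weyl] .

lemma inversions_w0: "inversions w0 = pos"
  using w0_pos_neg by (auto simp: inversions_def)

end

locale parabolic_factorization = longest_element R simple w0 + dominant_weight R simple lam
  for R :: "'a::euclidean_space set" and simple :: "'i::finite \<Rightarrow> 'a" and w0 lam +
  fixes ws1 ws2 :: "'i list"
  assumes v_min: "word simple ws1 lam = w0 lam"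
      "\<forall>y\<in>weyl simple. y lam = w0 lam \<longrightarrow> wlen simple (word simple ws1) \<le> wlen simple y"
    and v_red: "reduced_word simple ws1"
    and w0S: "is_longest simple (weyl_sub simple {i. lam \<bullet> coroot (simple i) = 0}) (word simple ws2)"
    and w0S_red: "reduced_word simple ws2"
begin

abbreviation "v \<equiv> word simple ws1"
abbreviation "wS \<equiv> word simple ws2"
abbreviation "lm \<equiv> w0 lam"
abbreviation "M \<equiv> length ws1"

lemma lm_inner_w0: "lm \<bullet> w0 x = lam \<bullet> x"
  using orthogonal_transformation_inner[OF orthogonal_w0] by simp

lemma lm_inner_pos_nonpos: "\<alpha> \<in> pos \<Longrightarrow> lm \<bullet> \<alpha> \<le> 0"
proof -
  assume a: "\<alpha> \<in> pos"
  have "lm \<bullet> \<alpha> = lam \<bullet> w0 \<alpha>" by (rule inner_w0_left)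
  thus ?thesis using lam_inner_neg_nonpos[OF w0_pos_neg[OF a]] by simp
qed

lemma lm_coroot_Ints: "\<alpha> \<in> R \<Longrightarrow> lm \<bullet> coroot \<alpha> \<in> \<int>"
proof -
  assume a: "\<alpha> \<in> R"
  have "lm \<bullet> coroot \<alpha> = lam \<bullet> coroot (w0 \<alpha>)" by (simp only: inner_w0_left orthogonal_transformation_coroot[OF orthogonal_w0])
  thus ?thesis using lam_coroot_Ints[OF w0_in_R[OF a]] by simp
qed

lemma v_in_weyl: "v \<in> weyl simple"
  by (rule word_in_weyl)
lemma orthogonal_v: "orthogonal_transformation v"
  by (rule orthogonal_word)
lemma v_lam: "v lam = lm"
  using v_min(1) .

lemma v_simple_pos_if_orth: "lam \<bullet> simple i = 0 \<Longrightarrow> v (simple i) \<in> pos"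
proof (rule ccontr)
  assume l: "lam \<bullet> simple i = 0" and n: "v (simple i) \<notin> pos"
  hence neg: "- v (simple i) \<in> pos" using word_simple_pos_or_neg by blast
  have "refl (simple i) lam = lam" using l by (simp add: refl_def inner_coroot)
  hence "(v \<circ> refl (simple i)) lam = lm" by (simp add: v_lam)
  moreover have "v \<circ> refl (simple i) \<in> weyl simple" unfolding word_snoc[symmetric] by (rule word_in_weyl)
  ultimately have "wlen simple v \<le> wlen simple (v \<circ> refl (simple i))" using v_min(2) by blast
  thus False using wlen_snoc_neg[OF v_in_weyl neg] by simp
qed

lemma v_pos_if_orth: "\<alpha> \<in> pos \<Longrightarrow> lam \<bullet> \<alpha> = 0 \<Longrightarrow> v \<alpha> \<in> pos"
  using weyl_pos_if_simple_pos[OF v_in_weyl] v_simple_pos_if_orth lam_inner_simple_eq_0 by blast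

lemma v_neg_if_lam_inner_pos: "\<alpha> \<in> pos \<Longrightarrow> lam \<bullet> \<alpha> > 0 \<Longrightarrow> - v \<alpha> \<in> pos"
proof -
  assume a: "\<alpha> \<in> pos" "lam \<bullet> \<alpha> > 0"
  have "lm \<bullet> v \<alpha> = lam \<bullet> \<alpha>" using orthogonal_transformation_inner[OF orthogonal_v, of lam \<alpha>] v_lam by simp
  hence "v \<alpha> \<notin> pos" using a(2) lm_inner_pos_nonpos[of "v \<alpha>"] by linarith
  thus ?thesis using pos_or_uminus_pos[OF word_in_R[OF pos_in_R[OF a(1)]]] by blast
qed

lemma inversions_v: "inversions v = {\<alpha> \<in> pos. lam \<bullet> \<alpha> > 0}"
proof (intro set_eqI iffI)
  fix \<alpha> assume "\<alpha> \<in> inversions v"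
  hence a: "\<alpha> \<in> pos" "- v \<alpha> \<in> pos" by (auto simp: inversions_def)
  have "lam \<bullet> \<alpha> \<noteq> 0" using v_pos_if_orth[OF a(1)] a(2) uminus_pos_notin by blast
  thus "\<alpha> \<in> {\<alpha> \<in> pos. lam \<bullet> \<alpha> > 0}" using lam_inner_pos_nonneg[OF a(1)] a(1) by simp
next
  fix \<alpha> assume "\<alpha> \<in> {\<alpha> \<in> pos. lam \<bullet> \<alpha> > 0}"
  thus "\<alpha> \<in> inversions v" using v_neg_if_lam_inner_pos by (simp add: inversions_def)
qed

lemma length_ws1_card: "M = card {\<alpha> \<in> pos. lam \<bullet> \<alpha> > 0}"
  using card_inversions_reduced[OF v_red] inversions_v by simp

lemma wS_word_orth: "\<exists>ws'. set ws' \<subseteq> {i. lam \<bullet> coroot (simple i) = 0} \<and> word simple ws' = wS"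
  using w0S by (auto simp: is_longest_def weyl_sub_def)

lemma word_orth_lam: "set ws' \<subseteq> {i. lam \<bullet> coroot (simple i) = 0} \<Longrightarrow> word simple ws' lam = lam"
  by (induction ws') (auto simp: refl_def)

lemma wS_lam: "wS lam = lam"
proof -
  obtain ws' where "set ws' \<subseteq> {i. lam \<bullet> coroot (simple i) = 0}" "word simple ws' = wS" using wS_word_orth by blast
  thus ?thesis using word_orth_lam[of ws'] by simp
qed

lemma wS_in_weyl: "wS \<in> weyl simple"
  by (rule word_in_weyl)
lemma orthogonal_wS: "orthogonal_transformation wS"
  by (rule orthogonal_word)

lemma wS_simple_neg_if_orth: "lam \<bullet> simple i = 0 \<Longrightarrow> - wS (simple i) \<in> pos"
proof (rule ccontr)
  assume l: "lam \<bullet> simple i = 0" and n: "- wS (simple i) \<notin> pos"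
  hence p: "wS (simple i) \<in> pos" using word_simple_pos_or_neg by blast
  obtain ws' where ws': "set ws' \<subseteq> {i. lam \<bullet> coroot (simple i) = 0}" "word simple ws' = wS"
    using wS_word_orth by blast
  have "wS \<circ> refl (simple i) = word simple (ws' @ [i])" using ws' by (simp add: word_snoc)
  moreover have "set (ws' @ [i]) \<subseteq> {i. lam \<bullet> coroot (simple i) = 0}" using ws' l lam_coroot_simple_eq_0_iff by auto
  ultimately have "wS \<circ> refl (simple i) \<in> weyl_sub simple {i. lam \<bullet> coroot (simple i) = 0}"
    unfolding weyl_sub_def by blast
  hence "wlen simple (wS \<circ> refl (simple i)) \<le> wlen simple wS" using w0S by (simp add: is_longest_def)
  thus False using wlen_snoc_pos[OF wS_in_weyl p] by simp
qed

lemma wS_neg_if_orth: "\<alpha> \<in> pos \<Longrightarrow> lam \<bullet> \<alpha> = 0 \<Longrightarrow> - wS \<alpha> \<in> pos"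
  using weyl_neg_if_simple_neg[OF wS_in_weyl] wS_simple_neg_if_orth lam_inner_simple_eq_0 by blast

lemma lam_inner_wS: "lam \<bullet> wS \<alpha> = lam \<bullet> \<alpha>"
  using orthogonal_transformation_inner[OF orthogonal_wS, of lam \<alpha>] wS_lam by simp

lemma wS_pos_if_lam_inner_pos: "\<alpha> \<in> pos \<Longrightarrow> lam \<bullet> \<alpha> > 0 \<Longrightarrow> wS \<alpha> \<in> pos"
  by (rule pos_if_lam_inner_pos[OF word_in_R[OF pos_in_R]]) (simp_all add: lam_inner_wS)

lemma inversions_wS: "inversions wS = {\<alpha> \<in> pos. lam \<bullet> \<alpha> = 0}"
proof (intro set_eqI iffI)
  fix \<alpha> assume "\<alpha> \<in> inversions wS"
  hence a: "\<alpha> \<in> pos" "- wS \<alpha> \<in> pos" by (auto simp: inversions_def)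
  have "\<not> lam \<bullet> \<alpha> > 0" using wS_pos_if_lam_inner_pos[OF a(1)] a(2) uminus_pos_notin by blast
  thus "\<alpha> \<in> {\<alpha> \<in> pos. lam \<bullet> \<alpha> = 0}" using lam_inner_pos_nonneg[OF a(1)] a(1) by simp
next
  fix \<alpha> assume "\<alpha> \<in> {\<alpha> \<in> pos. lam \<bullet> \<alpha> = 0}"
  hence "\<alpha> \<in> pos" "lam \<bullet> \<alpha> = 0" by auto
  thus "\<alpha> \<in> inversions wS" unfolding inversions_def using wS_neg_if_orth by blast
qed

lemma v_comp_wS: "v \<circ> wS = w0"
proof -
  have neg: "- v (wS \<alpha>) \<in> pos" if \<alpha>: "\<alpha> \<in> pos" for \<alpha>
  proof (cases "lam \<bullet> \<alpha> = 0")
    case True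
    then have "v (- wS \<alpha>) \<in> pos"
      using wS_neg_if_orth[OF \<alpha> True] lam_inner_wS[of \<alpha>] v_pos_if_orth by simp
    then show ?thesis
      by (simp add: orthogonal_transformation_minus[OF orthogonal_v])
  next
    case False
    then have "lam \<bullet> \<alpha> > 0"
      using lam_inner_pos_nonneg[OF \<alpha>] by simp
    then show ?thesis
      using wS_pos_if_lam_inner_pos[OF \<alpha>] lam_inner_wS[of \<alpha>] v_neg_if_lam_inner_pos by simp
  qed
  have "w0 \<circ> (v \<circ> wS) = id"
  proof (rule weyl_eq_id_if_pos_stable)
    show "w0 \<circ> (v \<circ> wS) \<in> weyl simple"
      using weyl_comp[OF w0_in_weyl weyl_comp[OF v_in_weyl wS_in_weyl]] .
    show "\<forall>\<alpha>\<in>pos. (w0 \<circ> (v \<circ> wS)) \<alpha> \<in> pos"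
      using w0_pos_neg[OF neg] by (simp add: orthogonal_transformation_minus[OF orthogonal_w0])
  qed
  then have "w0 (w0 (v (wS x))) = w0 x" for x
    by (simp add: fun_eq_iff)
  then show ?thesis
    by (simp add: fun_eq_iff w0_w0)
qed

lemma word_ws1_ws2: "word simple (ws1 @ ws2) = w0"
  using v_comp_wS by (simp add: word_append)

lemma card_pos_split: "card pos = card {\<alpha> \<in> pos. lam \<bullet> \<alpha> > 0} + card {\<alpha> \<in> pos. lam \<bullet> \<alpha> = 0}"
proof -
  have "card ({\<alpha> \<in> pos. lam \<bullet> \<alpha> > 0} \<union> {\<alpha> \<in> pos. lam \<bullet> \<alpha> = 0})
      = card {\<alpha> \<in> pos. lam \<bullet> \<alpha> > 0} + card {\<alpha> \<in> pos. lam \<bullet> \<alpha> = 0}"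
    by (rule card_Un_disjoint) (auto simp: finite_pos)
  moreover have "{\<alpha> \<in> pos. lam \<bullet> \<alpha> > 0} \<union> {\<alpha> \<in> pos. lam \<bullet> \<alpha> = 0} = pos"
    using lam_inner_pos_nonneg by (auto simp: less_eq_real_def)
  ultimately show ?thesis by simp
qed

lemma reduced_ws1_ws2: "reduced_word simple (ws1 @ ws2)"
proof -
  have "length (ws1 @ ws2) = card pos"
    using card_inversions_reduced[OF v_red] card_inversions_reduced[OF w0S_red] inversions_v inversions_wS card_pos_split by simp
  also have "\<dots> = wlen simple w0" using wlen_eq_card_inversions[OF w0_in_weyl] inversions_w0 by simp
  finally show ?thesis by (simp add: reduced_word_def word_ws1_ws2)
qed

abbreviation "betas \<equiv> fin_betas simple (ws1 @ ws2)"
abbreviation "N \<equiv> length (ws1 @ ws2)"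

lemma set_betas: "set betas = pos"
  using set_fin_betas_reduced[OF reduced_ws1_ws2] word_ws1_ws2 inversions_w0 by simp

lemma distinct_betas: "distinct betas"
  using distinct_fin_betas_reduced[OF reduced_ws1_ws2] .
lemma length_betas: "length betas = N"
  by simp

lemma betas_tail: "M \<le> j \<Longrightarrow> j < N \<Longrightarrow> betas ! j = fin_betas simple ws2 ! (j - M)"
proof -
  assume j: "M \<le> j" "j < N"
  hence "j - M < length ws2" by simp
  thus ?thesis unfolding fin_betas_def using j by (simp add: nth_append Suc_diff_le)
qed

lemma lam_inner_betas_tail: "M \<le> j \<Longrightarrow> j < N \<Longrightarrow> lam \<bullet> (betas ! j) = 0"
proof -
  assume j: "M \<le> j" "j < N"
  have "fin_betas simple ws2 ! (j - M) \<in> set (fin_betas simple ws2)" using j by simp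
  thus ?thesis using betas_tail[OF j] set_fin_betas_reduced[OF w0S_red] inversions_wS by auto
qed

lemma betas_pos: "j < N \<Longrightarrow> betas ! j \<in> pos"
  using set_betas nth_mem length_betas by metis

lemma lam_inner_betas_head: "j < M \<Longrightarrow> lam \<bullet> (betas ! j) > 0"
proof (rule ccontr)
  assume j: "j < M" and n: "\<not> lam \<bullet> (betas ! j) > 0"
  hence jN: "j < N" by simp
  hence "lam \<bullet> (betas ! j) = 0" using n lam_inner_pos_nonneg[OF betas_pos[OF jN]] by linarith
  hence "betas ! j \<in> set (fin_betas simple ws2)"
    using set_fin_betas_reduced[OF w0S_red] inversions_wS betas_pos[OF jN] by simp
  then obtain k where k: "k < length ws2" "fin_betas simple ws2 ! k = betas ! j"
    by (metis in_set_conv_nth length_fin_betas)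
  have "betas ! (M + k) = betas ! j" using betas_tail[of "M+k"] k by simp
  moreover have "M + k < N" "M + k \<noteq> j" using k j by auto
  moreover have "M + k < length betas" "j < length betas" using k jN by simp_all
  ultimately show False using nth_eq_iff_index_eq[OF distinct_betas] by blast
qed

lemma betas_head_cover: "\<alpha> \<in> pos \<Longrightarrow> lam \<bullet> \<alpha> > 0 \<Longrightarrow> \<exists>j < M. betas ! j = \<alpha>"
proof -
  assume a: "\<alpha> \<in> pos" "lam \<bullet> \<alpha> > 0"
  then obtain j where j: "j < N" "betas ! j = \<alpha>" using set_betas by (metis in_set_conv_nth length_betas)
  have "j < M"
  proof (rule ccontr)
    assume "\<not> j < M" hence "lam \<bullet> (betas ! j) = 0" using lam_inner_betas_tail[of j] j(1) by simp
    thus False using a(2) j(2) by simp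
  qed
  thus ?thesis using j by blast
qed

lemma w0_betas: "j < N \<Longrightarrow> w0 (betas ! j) = - word simple (take j (ws1 @ ws2)) (simple ((ws1 @ ws2) ! j))"
proof -
  assume j: "j < N"
  let ?ws = "ws1 @ ws2"
  have ws: "?ws = take j ?ws @ [?ws ! j] @ drop (Suc j) ?ws" using id_take_nth_drop[OF j] by simp
  have b: "betas ! j = word simple (rev (drop (Suc j) ?ws)) (simple (?ws ! j))"
    using j by (simp add: fin_betas_def)
  have "w0 (betas ! j) = word simple ?ws (word simple (rev (drop (Suc j) ?ws)) (simple (?ws ! j)))"
    by (simp only: b word_ws1_ws2[symmetric])
  also have "\<dots> = - word simple (take j ?ws) (simple (?ws ! j))"
    by (subst (1) ws) (rule word_split_simple[OF simple_nz])
  finally show ?thesis .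
qed

lemma alen_transl_lm: "int (alen R simple (transl lm)) = two_rho_pairing"
proof -
  have formula: "alen R simple (transl lm) = (\<Sum>\<alpha>\<in>pos. nat \<lfloor>lm \<bullet> coroot \<alpha>\<rfloor>
      + (if - id \<alpha> \<in> pos \<and> 0 \<le> \<lfloor>lm \<bullet> coroot \<alpha>\<rfloor> then 1 else 0)
      + nat (- \<lfloor>lm \<bullet> coroot \<alpha>\<rfloor> - 1)
      + (if id \<alpha> \<in> pos \<and> 1 \<le> - \<lfloor>lm \<bullet> coroot \<alpha>\<rfloor> then 1 else 0))"
  proof (rule alen_formula)
    show "id \<in> weyl simple"
      using word_in_weyl[of "[]"] by simp
  qed (simp_all add: lm_coroot_Ints)
  have "int (alen R simple (transl lm)) = (\<Sum>\<alpha>\<in>pos. \<bar>lam_pairing (w0 \<alpha>)\<bar>)"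
    unfolding formula of_nat_sum
  proof (rule sum.cong[OF refl])
    fix \<alpha> assume \<alpha>: "\<alpha> \<in> pos"
    have "\<lfloor>lm \<bullet> coroot \<alpha>\<rfloor> = lam_pairing (w0 \<alpha>)"
      by (simp add: lam_pairing_def inner_w0_left orthogonal_transformation_coroot[OF orthogonal_w0])
    moreover have "lam_pairing (w0 \<alpha>) \<le> 0"
      using lam_pairing_pos_iff[OF w0_in_R[OF pos_in_R[OF \<alpha>]]] lam_inner_neg_nonpos[OF w0_pos_neg[OF \<alpha>]] by linarith
    ultimately show "int (nat \<lfloor>lm \<bullet> coroot \<alpha>\<rfloor>
      + (if - id \<alpha> \<in> pos \<and> 0 \<le> \<lfloor>lm \<bullet> coroot \<alpha>\<rfloor> then 1 else 0)
      + nat (- \<lfloor>lm \<bullet> coroot \<alpha>\<rfloor> - 1)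
      + (if id \<alpha> \<in> pos \<and> 1 \<le> - \<lfloor>lm \<bullet> coroot \<alpha>\<rfloor> then 1 else 0)) = \<bar>lam_pairing (w0 \<alpha>)\<bar>"
      using \<alpha> uminus_pos_notin[OF \<alpha>] by (cases "lam_pairing (w0 \<alpha>) = 0") auto
  qed
  also have "\<dots> = two_rho_pairing"
    by (rule sum_abs_lam_pairing_weyl[OF w0_in_weyl])
  finally show ?thesis .
qed

abbreviation "v_inv \<equiv> word simple (rev ws1)"

lemma v_inv_in_weyl: "v_inv \<in> weyl simple"
  by (rule word_in_weyl)

lemma lam_inner_v_inv: "lam \<bullet> v_inv x = lm \<bullet> x"
  using inner_word_left[of simple ws1 lam x, OF simple_nz] v_lam by simp

lemma v_v_inv: "v (v_inv x) = x"
  by (rule word_word_rev[OF simple_nz])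

lemma v_inv_v: "v_inv (v x) = x"
  by (rule word_rev_word[OF simple_nz])

lemma v_inv_pos_if_lam_inner_eq_0: "\<alpha> \<in> pos \<Longrightarrow> lam \<bullet> v_inv \<alpha> = 0 \<Longrightarrow> v_inv \<alpha> \<in> pos"
proof (rule ccontr)
  assume \<alpha>: "\<alpha> \<in> pos" "lam \<bullet> v_inv \<alpha> = 0" and "v_inv \<alpha> \<notin> pos"
  then have "- v_inv \<alpha> \<in> pos"
    using pos_or_uminus_pos[OF word_in_R[OF pos_in_R[OF \<alpha>(1)]]] by blast
  then have "v (- v_inv \<alpha>) \<in> pos"
    using v_pos_if_orth[of "- v_inv \<alpha>"] \<alpha>(2) by simp
  then have "- \<alpha> \<in> pos"
    by (simp add: orthogonal_transformation_minus[OF orthogonal_v] v_v_inv)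
  then show False
    using uminus_pos_notin[OF \<alpha>(1)] by simp
qed

lemma card_lm_inner_neg: "card {\<alpha> \<in> pos. lm \<bullet> \<alpha> < 0} = M"
proof -
  have invol: "- w0 (- w0 \<alpha>) = \<alpha>" for \<alpha>
    by (simp add: orthogonal_transformation_minus[OF orthogonal_w0] w0_w0)
  have "bij_betw (\<lambda>\<alpha>. - w0 \<alpha>) {\<alpha> \<in> pos. lm \<bullet> \<alpha> < 0} {\<beta> \<in> pos. lam \<bullet> \<beta> > 0}"
  proof (rule bij_betw_byWitness[where f'="\<lambda>\<beta>. - w0 \<beta>"])
    show "(\<lambda>\<alpha>. - w0 \<alpha>) ` {\<alpha> \<in> pos. lm \<bullet> \<alpha> < 0} \<subseteq> {\<beta> \<in> pos. lam \<bullet> \<beta> > 0}"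
      using w0_pos_neg inner_w0_left[of lam] by auto
    show "(\<lambda>\<beta>. - w0 \<beta>) ` {\<beta> \<in> pos. lam \<bullet> \<beta> > 0} \<subseteq> {\<alpha> \<in> pos. lm \<bullet> \<alpha> < 0}"
      using w0_pos_neg lm_inner_w0 by auto
  qed (simp_all add: invol)
  then show ?thesis
    by (simp add: bij_betw_same_card length_ws1_card)
qed

lemma alen_transl_v_inv: "int (alen R simple (transl lam \<circ> ext_elt v_inv 0)) = two_rho_pairing - int M"
proof -
  have "int (alen R simple (transl lam \<circ> ext_elt v_inv 0)) =
      (\<Sum>\<alpha>\<in>pos. \<bar>lam_pairing (v_inv \<alpha>)\<bar> - (if lm \<bullet> \<alpha> < 0 then 1 else 0))"
    unfolding alen_transl_comp[OF v_inv_in_weyl]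
  proof (rule sum.cong[OF refl])
    fix \<alpha> assume \<alpha>: "\<alpha> \<in> pos"
    then have vR: "v_inv \<alpha> \<in> R"
      using word_in_R pos_in_R by blast
    have "lam_pairing (v_inv \<alpha>) < 0 \<longleftrightarrow> lm \<bullet> \<alpha> < 0"
      using lam_pairing_neg_iff[OF vR] lam_inner_v_inv by simp
    moreover have "lam_pairing (v_inv \<alpha>) = 0 \<Longrightarrow> - v_inv \<alpha> \<notin> pos"
      using lam_pairing_eq_0_iff[OF vR] v_inv_pos_if_lam_inner_eq_0[OF \<alpha>] uminus_pos_notin by blast
    ultimately show "\<bar>lam_pairing (v_inv \<alpha>)\<bar> - (if lam_pairing (v_inv \<alpha>) < 0 then 1 else 0)
        + (if lam_pairing (v_inv \<alpha>) = 0 \<and> - v_inv \<alpha> \<in> pos then 1 else 0)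
      = \<bar>lam_pairing (v_inv \<alpha>)\<bar> - (if lm \<bullet> \<alpha> < 0 then 1 else 0)"
      by auto
  qed
  also have "\<dots> = two_rho_pairing - int M"
    using sum_abs_lam_pairing_weyl[OF v_inv_in_weyl] sum_if_card[OF finite_pos] card_lm_inner_neg
    by (simp add: sum_subtractf)
  finally show ?thesis .
qed

text \<open>The sign pattern of \<open>v(\<lambda>\<^sub>-)\<^sup>-\<^sup>1\<close> on the positive roots; it determines \<open>v(\<lambda>\<^sub>-)\<^sup>-\<^sup>1\<close>
  among all elements of \<open>W\<close>.\<close>

definition minimal_sign :: "'a \<Rightarrow> bool" where
  "minimal_sign \<delta> \<longleftrightarrow> (\<delta> \<in> pos \<and> lam \<bullet> \<delta> = 0) \<or> (- \<delta> \<in> pos \<and> lam \<bullet> \<delta> \<noteq> 0)"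

lemma not_minimal_sign_uminus: "minimal_sign \<delta> \<Longrightarrow> \<not> minimal_sign (- \<delta>)"
  unfolding minimal_sign_def using uminus_pos_notin by fastforce

lemma minimal_sign_v_inv:
  assumes \<alpha>: "\<alpha> \<in> pos"
  shows "minimal_sign (v_inv \<alpha>)"
proof (cases "lam \<bullet> v_inv \<alpha> = 0")
  case True
  then show ?thesis
    using v_inv_pos_if_lam_inner_eq_0[OF \<alpha>] by (simp add: minimal_sign_def)
next
  case False
  then have "lam \<bullet> v_inv \<alpha> < 0"
    using lam_inner_v_inv lm_inner_pos_nonpos[OF \<alpha>] by simp
  then show ?thesis
    using neg_if_lam_inner_neg[OF word_in_R[OF pos_in_R[OF \<alpha>]]] by (simp add: minimal_sign_def)
qed

lemma minimal_sign_unique: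
  assumes w: "w \<in> weyl simple" and sign: "\<forall>\<alpha>\<in>pos. minimal_sign (w \<alpha>)"
  shows "w = v_inv"
proof -
  have "v (w \<alpha>) \<in> pos" if \<alpha>: "\<alpha> \<in> pos" for \<alpha>
  proof (rule ccontr)
    assume "v (w \<alpha>) \<notin> pos"
    then have "- v (w \<alpha>) \<in> pos"
      using pos_or_uminus_pos[OF word_in_R[OF weyl_in_R[OF w pos_in_R[OF \<alpha>]]]] by blast
    then have "minimal_sign (v_inv (- v (w \<alpha>)))"
      by (rule minimal_sign_v_inv)
    moreover have "v_inv (- v (w \<alpha>)) = - w \<alpha>"
      by (simp add: orthogonal_transformation_minus[OF orthogonal_word] v_inv_v)
    ultimately show False
      using not_minimal_sign_uminus sign \<alpha> by auto
  qed
  then have "v \<circ> w = id"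
    using weyl_eq_id_if_pos_stable[OF weyl_comp[OF v_in_weyl w]] by simp
  then have "v_inv (v (w x)) = v_inv x" for x
    by (simp add: fun_eq_iff)
  then show ?thesis
    by (simp add: v_inv_v fun_eq_iff)
qed

text \<open>The roots \<open>\<alpha> > 0\<close> with \<open>\<langle>\<lambda>, (w \<alpha>)\<^sup>\<or>\<rangle> < 0\<close> inject via \<open>-w\<close> into the inversion set of
  \<open>v(\<lambda>\<^sub>-)\<close>, which has \<open>M\<close> elements.\<close>

lemma lam_pairing_neg_inj:
  assumes w: "w \<in> weyl simple"
  shows "inj_on (\<lambda>\<alpha>. - w \<alpha>) {\<alpha> \<in> pos. lam_pairing (w \<alpha>) < 0}"
    and "(\<lambda>\<alpha>. - w \<alpha>) ` {\<alpha> \<in> pos. lam_pairing (w \<alpha>) < 0} \<subseteq> {\<beta> \<in> pos. lam \<bullet> \<beta> > 0}"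
  using orthogonal_transformation_injD[OF orthogonal_weyl[OF w]]
    lam_pairing_neg_iff[OF weyl_in_R[OF w pos_in_R]] neg_if_lam_inner_neg[OF weyl_in_R[OF w pos_in_R]]
  by (auto simp: inj_on_def)

lemma alen_transl_comp_eq:
  assumes w: "w \<in> weyl simple"
    and le: "int (alen R simple (transl lam \<circ> ext_elt w 0)) \<le> two_rho_pairing - int M"
  shows "w = v_inv"
proof -
  let ?A = "{\<alpha> \<in> pos. lam_pairing (w \<alpha>) < 0}"
  have card_A: "card ?A \<le> M"
    using card_inj_on_le[OF lam_pairing_neg_inj[OF w]] finite_pos length_ws1_card by simp
  then have "card ?A = M" and "card {\<alpha> \<in> pos. lam_pairing (w \<alpha>) = 0 \<and> - w \<alpha> \<in> pos} = 0"
    using le alen_transl_comp_card[OF w] by simp_all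
  then have no_zero_inv: "\<not> (lam_pairing (w \<alpha>) = 0 \<and> - w \<alpha> \<in> pos)" if "\<alpha> \<in> pos" for \<alpha>
    using that finite_pos by simp
  have onto: "(\<lambda>\<alpha>. - w \<alpha>) ` ?A = {\<beta> \<in> pos. lam \<bullet> \<beta> > 0}"
    using \<open>card ?A = M\<close> lam_pairing_neg_inj[OF w] finite_pos length_ws1_card
    by (intro card_subset_eq) (simp_all add: card_image)
  show ?thesis
  proof (rule minimal_sign_unique[OF w], rule ballI)
    fix \<alpha> assume \<alpha>: "\<alpha> \<in> pos"
    have wR: "w \<alpha> \<in> R"
      using weyl_in_R[OF w pos_in_R[OF \<alpha>]] .
    consider "lam_pairing (w \<alpha>) = 0" | "lam_pairing (w \<alpha>) < 0" | "lam_pairing (w \<alpha>) > 0"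
      by linarith
    then show "minimal_sign (w \<alpha>)"
    proof cases
      case 1
      then show ?thesis
        using no_zero_inv[OF \<alpha>] pos_or_uminus_pos[OF wR] lam_pairing_eq_0_iff[OF wR]
        by (auto simp: minimal_sign_def)
    next
      case 2
      then show ?thesis
        using lam_pairing_neg_iff[OF wR] neg_if_lam_inner_neg[OF wR] by (simp add: minimal_sign_def)
    next
      case 3
      text \<open>Impossible: \<open>w \<alpha>\<close> would be some \<open>-w \<alpha>'\<close> with \<open>\<alpha>' \<in> A\<close>, forcing \<open>\<alpha> = -\<alpha>'\<close>.\<close>
      then have "w \<alpha> \<in> {\<beta> \<in> pos. lam \<bullet> \<beta> > 0}"
        using lam_pairing_pos_iff[OF wR] pos_if_lam_inner_pos[OF wR] by simp
      then obtain \<alpha>' where "\<alpha>' \<in> ?A" "w \<alpha> = w (- \<alpha>')"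
        using onto orthogonal_transformation_minus[OF orthogonal_weyl[OF w]] by force
      then show ?thesis
        using \<alpha> orthogonal_transformation_injD[OF orthogonal_weyl[OF w]] uminus_pos_notin by force
    qed
  qed
qed


lemma transl_v_inv_shortest:
  assumes "y \<in> {transl lam \<circ> ext_elt w 0 | w. w \<in> weyl simple}"
    and "y \<noteq> transl lam \<circ> ext_elt v_inv 0"
  shows "alen R simple (transl lam \<circ> ext_elt v_inv 0) < alen R simple y"
  using assms alen_transl_v_inv alen_transl_comp_eq by (force simp: not_less)

end

section \<open>The reduced expression of \<open>t(\<lambda>\<^sub>-)\<close>\<close>

locale reduced_translation = parabolic_factorization R simple w0 lam ws1 ws2
  for R :: "'a::euclidean_space set" and simple :: "'i::finite \<Rightarrow> 'a" and w0 lam ws1 ws2 +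
  fixes \<phi> :: 'a and u :: "'a \<times> real \<Rightarrow> 'a \<times> real" and ls :: "'i option list"
  assumes phi: "highest_short_root R simple \<phi>"
    and u: "u \<in> Omega R simple"
    and t_expr: "transl (w0 lam) = u \<circ> aword simple \<phi> ls"
    and t_red: "length ls = alen R simple (transl (w0 lam))"
    and sorted: "sorted_wrt (aff_prec simple (ws1 @ ws2) (w0 lam) w0) (aff_betas simple \<phi> ls)"
    and exhaust: "set (aff_betas simple \<phi> ls) =
       {\<beta> \<in> aff_pos R simple. transl (w0 lam) \<beta> \<in> aff_neg R simple}"
begin

abbreviation "tbetas \<equiv> aff_betas simple \<phi> ls"
abbreviation "tinv \<equiv> {\<beta> \<in> aff_pos R simple. transl lm \<beta> \<in> aff_neg R simple}"
abbreviation "aroot \<equiv> aff_simple_root simple \<phi>"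

lemma phi_nz: "\<phi> \<noteq> 0"
  using phi root_nz by (simp add: highest_short_root_def)

lemma u_uminus: "u (- p) = - u p"
  and u_aff_reflection: "u (aff_reflection b q) = aff_reflection (u b) (u q)"
proof -
  obtain v' \<nu> where "u = ext_elt v' \<nu>" "v' \<in> weyl simple"
    using u by (auto simp: Omega_def ext_weyl_def)
  then show "u (- p) = - u p" "u (aff_reflection b q) = aff_reflection (u b) (u q)"
    by (simp_all add: ext_elt_uminus ext_elt_aff_reflection orthogonal_weyl)
qed

lemma length_tbetas [simp]: "length tbetas = length ls"
  by (simp add: aff_betas_def)

lemma transl_lm_tbetas:
  assumes k: "k < length ls"
  shows "transl lm (tbetas ! k) = - u (aword simple \<phi> (take k ls) (aroot (ls ! k)))"
proof -
  have ls: "ls = take k ls @ [ls ! k] @ drop (Suc k) ls"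
    using id_take_nth_drop[OF k] by simp
  have "transl lm (tbetas ! k) = u (aword simple \<phi> ls (aword simple \<phi> (rev (drop (Suc k) ls)) (aroot (ls ! k))))"
    using k by (simp add: aff_betas_def t_expr)
  also have "\<dots> = u (- aword simple \<phi> (take k ls) (aroot (ls ! k)))"
    by (subst (1) ls) (simp only: aword_split_simple[OF simple_nz phi_nz])
  finally show ?thesis
    by (simp add: u_uminus)
qed

lemma tinv_elem:
  assumes \<beta>: "\<beta> \<in> tinv"
  obtains \<alpha> k where "\<alpha> \<in> R" "\<beta> = (coroot \<alpha>, of_int k)" "0 < k" "of_int k \<le> lm \<bullet> coroot \<alpha>"
proof -
  obtain \<alpha> k where \<alpha>: "\<alpha> \<in> R" "\<beta> = (coroot \<alpha>, of_int k)" "k > 0 \<or> k = 0 \<and> \<alpha> \<in> pos"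
    using \<beta> by (auto simp: aff_pos_def)
  obtain m where m: "lm \<bullet> coroot \<alpha> = of_int m"
    using lm_coroot_Ints[OF \<alpha>(1)] by (auto elim!: Ints_cases)
  have "(coroot \<alpha>, of_int (k - m)) \<in> aff_neg R simple"
    using \<beta> \<alpha>(2) m by simp
  then have neg: "- (k - m) > 0 \<or> k - m = 0 \<and> - \<alpha> \<in> pos"
    using aff_neg_iff[OF \<alpha>(1)] by blast
  have "m \<le> 0" if "\<alpha> \<in> pos"
    using that m lm_inner_pos_nonpos inner_coroot_pos_iff[OF root_nz[OF \<alpha>(1)], of lm] by force
  then have "k > 0" "k \<le> m"
    using \<alpha>(3) neg uminus_pos_notin by auto
  then show ?thesis
    using that \<alpha> m by simp
qed

definition phi_level :: "'a \<times> real \<Rightarrow> real" where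
  "phi_level \<beta> = fst (Phi lm w0 \<beta>)"

lemma phi_level_eq: "phi_level \<beta> = (lm \<bullet> fst \<beta> - snd \<beta>) / (lm \<bullet> fst \<beta>)"
  by (simp add: phi_level_def Phi_def)

lemma phi_level_nonneg: "\<beta> \<in> tinv \<Longrightarrow> phi_level \<beta> \<ge> 0"
  by (elim tinv_elem) (simp add: phi_level_eq)

text \<open>The inversions of \<open>t(\<lambda>\<^sub>-)\<close> of level zero are \<open>(w\<^sub>\<circ> \<beta>\<^sub>j\<^sup>\<or>, \<langle>\<lambda>, \<beta>\<^sub>j\<^sup>\<or>\<rangle>)\<close> for \<open>j < M\<close>; their
  image under \<open>\<Phi>\<close> is \<open>(0, \<beta>\<^sub>j)\<close>.\<close>

definition level0_root :: "nat \<Rightarrow> 'a \<times> real" where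
  "level0_root j = (w0 (coroot (betas ! j)), lam \<bullet> coroot (betas ! j))"

lemma transl_lm_level0_root: "transl lm (level0_root j) = (w0 (coroot (betas ! j)), 0)"
  by (simp add: level0_root_def lm_inner_w0)

lemma phi_level_level0_root: "phi_level (level0_root j) = 0"
  by (simp add: phi_level_eq level0_root_def lm_inner_w0)

lemma snd_Phi_level0_root: "j < M \<Longrightarrow> snd (Phi lm w0 (level0_root j)) = betas ! j"
  using betas_pos[of j] pos_in_R by (simp add: Phi_def level0_root_def w0_w0 coroot_coroot root_nz)

lemma inj_on_level0_root: "inj_on level0_root {..<M}"
proof (rule inj_onI)
  fix i j assume "i \<in> {..<M}" "j \<in> {..<M}" "level0_root i = level0_root j"
  then have "i < M" "j < M" "betas ! i = betas ! j"
    using snd_Phi_level0_root by (metis lessThan_iff)+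
  then show "i = j"
    using nth_eq_iff_index_eq[OF distinct_betas] by simp
qed

lemma level0_root_in_tinv:
  assumes j: "j < M"
  shows "level0_root j \<in> tinv"
proof -
  have bp: "betas ! j \<in> pos" and w0R: "w0 (betas ! j) \<in> R"
    using betas_pos j w0_in_R pos_in_R by auto
  obtain m where m: "lam \<bullet> coroot (betas ! j) = of_int m"
    using lam_coroot_Ints[OF pos_in_R[OF bp]] by (auto elim!: Ints_cases)
  have "m > 0"
    using inner_coroot_pos_iff[OF root_nz[OF pos_in_R[OF bp]], of lam] lam_inner_betas_head j m by simp
  moreover have "level0_root j = (coroot (w0 (betas ! j)), of_int m)"
    using m by (simp add: level0_root_def orthogonal_transformation_coroot[OF orthogonal_w0])
  ultimately have "level0_root j \<in> aff_pos R simple"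
    using aff_pos_iff[OF w0R] by simp
  moreover have "transl lm (level0_root j) = (coroot (w0 (betas ! j)), of_int 0)"
    using transl_lm_level0_root by (simp add: orthogonal_transformation_coroot[OF orthogonal_w0])
  moreover have "(coroot (w0 (betas ! j)), of_int 0) \<in> aff_neg R simple"
    using aff_neg_iff[OF w0R, of 0] w0_pos_neg[OF bp] by simp
  ultimately show ?thesis
    by simp
qed

lemma phi_level_eq_0_imp:
  assumes \<beta>: "\<beta> \<in> tinv" and level: "phi_level \<beta> = 0"
  shows "\<exists>j<M. \<beta> = level0_root j"
proof -
  obtain \<alpha> k where \<alpha>: "\<alpha> \<in> R" "\<beta> = (coroot \<alpha>, of_int k)" "0 < k"
    and "of_int k \<le> lm \<bullet> coroot \<alpha>"
    using tinv_elem[OF \<beta>] .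
  then have lam_k: "lam \<bullet> coroot (w0 \<alpha>) = of_int k"
    using level by (simp add: phi_level_eq orthogonal_transformation_coroot[OF orthogonal_w0] inner_w0_left)
  have w0R: "w0 \<alpha> \<in> R"
    using w0_in_R \<alpha>(1) by blast
  then have "lam \<bullet> w0 \<alpha> > 0"
    using lam_k \<alpha>(3) inner_coroot_pos_iff[OF root_nz[OF w0R], of lam] by simp
  then obtain j where j: "j < M" "betas ! j = w0 \<alpha>"
    using betas_head_cover pos_if_lam_inner_pos[OF w0R] by blast
  then have "level0_root j = \<beta>"
    using lam_k \<alpha>(2) by (simp add: level0_root_def orthogonal_transformation_coroot[OF orthogonal_w0] w0_w0)
  then show ?thesis
    using j by auto
qed

lemma distinct_tbetas: "distinct tbetas"
proof (rule card_distinct)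
  have "card (set tbetas) = card tinv"
    using exhaust by simp
  also have "\<dots> = length ls"
    using t_red by (simp add: alen_def)
  finally show "card (set tbetas) = length tbetas"
    by simp
qed

lemma tbetas_in_tinv: "i < length ls \<Longrightarrow> tbetas ! i \<in> tinv"
  using exhaust nth_mem[of i tbetas] by simp

lemma tbetas_sorted_nth:
  "i < j \<Longrightarrow> j < length ls \<Longrightarrow>
   phi_level (tbetas ! i) < phi_level (tbetas ! j) \<or> (phi_level (tbetas ! i) = phi_level (tbetas ! j) \<and>
     fin_succ simple (ws1 @ ws2) (snd (Phi lm w0 (tbetas ! i))) (snd (Phi lm w0 (tbetas ! j))))"
  using sorted sorted_wrt_iff_nth_less[of _ tbetas] by (simp add: aff_prec_def phi_level_def)

text \<open>Levels are nonnegative on the inversion set and the list is sorted by level first, so the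
  level-zero entries form an initial segment; there are \<open>M\<close> of them.\<close>

lemma phi_level_zero_indices: "{i. i < length ls \<and> phi_level (tbetas ! i) = 0} = {..<M}"
proof -
  define Z where "Z = {i. i < length ls \<and> phi_level (tbetas ! i) = 0}"
  have down: "i \<in> Z" if "i < j" "j \<in> Z" for i j
    using that tbetas_sorted_nth[of i j] phi_level_nonneg[OF tbetas_in_tinv, of i] by (auto simp: Z_def)
  have "(\<lambda>i. tbetas ! i) ` Z = level0_root ` {..<M}"
  proof
    show "(\<lambda>i. tbetas ! i) ` Z \<subseteq> level0_root ` {..<M}"
    proof (rule image_subsetI)
      fix i assume "i \<in> Z"
      then obtain j where "j < M" "tbetas ! i = level0_root j"
        using phi_level_eq_0_imp[OF tbetas_in_tinv] by (auto simp: Z_def)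
      then show "tbetas ! i \<in> level0_root ` {..<M}"
        by (metis imageI lessThan_iff)
    qed
    show "level0_root ` {..<M} \<subseteq> (\<lambda>i. tbetas ! i) ` Z"
    proof
      fix x assume "x \<in> level0_root ` {..<M}"
      then obtain j where j: "j < M" "x = level0_root j"
        by blast
      then have "x \<in> set tbetas"
        using level0_root_in_tinv exhaust by simp
      then obtain i where i: "i < length ls" "tbetas ! i = x"
        by (auto simp: in_set_conv_nth)
      then have "i \<in> Z"
        using j phi_level_level0_root by (simp add: Z_def)
      then show "x \<in> (\<lambda>i. tbetas ! i) ` Z"
        using i by blast
    qed
  qed
  moreover have "inj_on (\<lambda>i. tbetas ! i) Z"
    using distinct_tbetas by (auto simp: inj_on_def Z_def nth_eq_iff_index_eq)
  ultimately have card_Z: "card Z = M"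
    using card_image[of "\<lambda>i. tbetas ! i" Z] card_image[OF inj_on_level0_root] by simp
  have "{..<M} \<subseteq> Z"
  proof
    fix i assume i: "i \<in> {..<M}"
    show "i \<in> Z"
    proof (rule ccontr)
      assume "i \<notin> Z"
      then have "Z \<subseteq> {..<i}"
        using down by (metis lessThan_iff linorder_neqE_nat subsetI)
      then show False
        using i card_Z card_mono[of "{..<i}" Z] by simp
    qed
  qed
  then show ?thesis
    using card_Z card_subset_eq[of Z "{..<M}"] by (simp add: Z_def)
qed

lemma M_le_length_ls: "M \<le> length ls"
proof -
  have "\<forall>i<M. i < length ls"
    using phi_level_zero_indices by auto
  then show ?thesis
    by (cases M) auto
qed

lemma fin_succ_betas_less:
  "fin_succ simple (ws1 @ ws2) (betas ! a) (betas ! b) \<Longrightarrow> a < N \<Longrightarrow> b < N \<Longrightarrow> a < b"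
  using nth_eq_iff_index_eq[OF distinct_betas] by (auto simp: fin_succ_def)

text \<open>On level zero \<open>\<prec>'\<close> is the order of the \<open>\<beta>\<^sub>j\<close>, so the level-zero prefix is
  \<open>level0_root 0, \<dots>, level0_root (M - 1)\<close> in this order.\<close>

lemma tbetas_prefix:
  assumes k: "k < M"
  shows "tbetas ! k = level0_root k"
proof -
  have level0: "i < length ls" "phi_level (tbetas ! i) = 0" if "i < M" for i
    using phi_level_zero_indices that by auto
  define \<sigma> where "\<sigma> i = (SOME j. j < M \<and> tbetas ! i = level0_root j)" for i
  have \<sigma>: "\<sigma> i < M \<and> tbetas ! i = level0_root (\<sigma> i)" if "i < M" for i
  proof -
    have "\<exists>j<M. tbetas ! i = level0_root j"
      using phi_level_eq_0_imp[OF tbetas_in_tinv[OF level0(1)[OF that]] level0(2)[OF that]] .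
    then show ?thesis
      unfolding \<sigma>_def by (rule someI_ex)
  qed
  have "\<sigma> i < \<sigma> j" if ij: "i < j" "j < M" for i j
  proof -
    have "fin_succ simple (ws1 @ ws2) (snd (Phi lm w0 (tbetas ! i))) (snd (Phi lm w0 (tbetas ! j)))"
      using tbetas_sorted_nth[OF ij(1) level0(1)[OF ij(2)]] level0(2) ij by simp
    then have "fin_succ simple (ws1 @ ws2) (betas ! \<sigma> i) (betas ! \<sigma> j)"
      using \<sigma>[of i] \<sigma>[of j] ij snd_Phi_level0_root by simp
    moreover have "\<sigma> i < N" "\<sigma> j < N"
      using \<sigma>[of i] \<sigma>[of j] ij by auto
    ultimately show ?thesis
      by (rule fin_succ_betas_less)
  qed
  then have "\<sigma> k = k"
    using strict_mono_self_map_eq_id[of M \<sigma> k] \<sigma> k by blast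
  then show ?thesis
    using \<sigma>[OF k] by simp
qed

lemma w0_coroot_betas:
  assumes k: "k < M"
  shows "w0 (coroot (betas ! k)) = - word simple (take k ws1) (coroot (simple (ws1 ! k)))"
proof -
  have "w0 (coroot (betas ! k)) = coroot (w0 (betas ! k))"
    by (simp add: orthogonal_transformation_coroot[OF orthogonal_w0])
  also have "\<dots> = coroot (- word simple (take k (ws1 @ ws2)) (simple ((ws1 @ ws2) ! k)))"
    using w0_betas[of k] k by simp
  also have "\<dots> = - word simple (take k ws1) (coroot (simple (ws1 ! k)))"
    using k by (simp add: coroot_minus orthogonal_transformation_coroot[OF orthogonal_word] nth_append)
  finally show ?thesis .
qed

text \<open>Inductive step for \<open>u s\<^sub>\<ell>\<^sub>1 \<cdots> s\<^sub>\<ell>\<^sub>k = s\<^sub>i\<^sub>1 \<cdots> s\<^sub>i\<^sub>k u\<close>: comparing the two expressions for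
  \<open>t(\<lambda>\<^sub>-) \<beta>\<^sup>~\<^sub>k\<close> shows that \<open>u\<close> maps the simple affine root \<open>\<alpha>\<^sub>\<ell>\<^sub>k\<close> to \<open>\<alpha>\<^sub>i\<^sub>k\<^sup>\<or>\<close>.\<close>

lemma u_aroot_prefix:
  assumes k: "k < M"
    and IH: "u \<circ> aword simple \<phi> (take k ls) = ext_elt (word simple (take k ws1)) 0 \<circ> u"
  shows "u (aroot (ls ! k)) = (coroot (simple (ws1 ! k)), 0)"
proof -
  let ?W = "word simple (take k ws1)"
  have "- u (aword simple \<phi> (take k ls) (aroot (ls ! k))) = transl lm (tbetas ! k)"
    using transl_lm_tbetas k M_le_length_ls by simp
  also have "\<dots> = (- ?W (coroot (simple (ws1 ! k))), 0)"
    using tbetas_prefix[OF k] transl_lm_level0_root w0_coroot_betas[OF k] by simp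
  finally have "ext_elt ?W 0 (u (aroot (ls ! k))) = ext_elt ?W 0 (coroot (simple (ws1 ! k)), 0)"
    using fun_cong[OF IH, of "aroot (ls ! k)"] by (simp add: minus_equation_iff)
  then show ?thesis
    using ext_elt_zero_injD[OF orthogonal_word] by blast
qed

lemma u_comp_aword_prefix:
  "k \<le> M \<Longrightarrow> u \<circ> aword simple \<phi> (take k ls) = ext_elt (word simple (take k ws1)) 0 \<circ> u"
  and u_comp_aff_refl:
  "k < M \<Longrightarrow> u \<circ> aff_refl simple \<phi> (ls ! k) = aff_refl simple \<phi> (Some (ws1 ! k)) \<circ> u"
proof -
  have conj: "u \<circ> aff_refl simple \<phi> (ls ! k) = aff_refl simple \<phi> (Some (ws1 ! k)) \<circ> u"
    if "k < M" "u \<circ> aword simple \<phi> (take k ls) = ext_elt (word simple (take k ws1)) 0 \<circ> u" for k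
    using u_aroot_prefix[OF that]
    by (auto simp: fun_eq_iff aff_refl_eq_aff_reflection[OF simple_nz phi_nz] u_aff_reflection
        aff_simple_root_def)
  show prefix: "u \<circ> aword simple \<phi> (take k ls) = ext_elt (word simple (take k ws1)) 0 \<circ> u"
    if "k \<le> M" for k
    using that
  proof (induction k)
    case 0
    show ?case
      by (auto simp: fun_eq_iff ext_elt_def)
  next
    case (Suc k)
    then have k: "k < M" "k < length ls"
      using M_le_length_ls by simp_all
    have IH: "u \<circ> aword simple \<phi> (take k ls) = ext_elt (word simple (take k ws1)) 0 \<circ> u"
      by (rule Suc.IH) (use k in simp)
    have "u \<circ> aword simple \<phi> (take (Suc k) ls) = (u \<circ> aword simple \<phi> (take k ls)) \<circ> aff_refl simple \<phi> (ls ! k)"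
      by (simp only: take_Suc_conv_app_nth[OF k(2)] aword_append aword_Cons aword_Nil comp_id comp_assoc)
    also have "\<dots> = ext_elt (word simple (take k ws1)) 0 \<circ> (aff_refl simple \<phi> (Some (ws1 ! k)) \<circ> u)"
      by (simp only: IH comp_assoc conj[OF k(1) IH])
    also have "\<dots> = ext_elt (word simple (take (Suc k) ws1)) 0 \<circ> u"
      using k(1) by (simp add: take_Suc_conv_app_nth word_snoc aff_refl_def ext_elt_comp_zero flip: comp_assoc)
    finally show ?case .
  qed
  show "k < M \<Longrightarrow> u \<circ> aff_refl simple \<phi> (ls ! k) = aff_refl simple \<phi> (Some (ws1 ! k)) \<circ> u"
    using conj prefix by simp
qed

lemma u_comp_aword_drop: "u \<circ> aword simple \<phi> (drop M ls) = transl lam \<circ> ext_elt v_inv 0"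
proof
  fix p :: "'a \<times> real"
  let ?m = "u \<circ> aword simple \<phi> (drop M ls)"
  have "transl lm p = u (aword simple \<phi> (take M ls) (aword simple \<phi> (drop M ls) p))"
    using t_expr aword_append[of simple \<phi> "take M ls" "drop M ls"] by simp
  also have "\<dots> = ext_elt v 0 (?m p)"
    using fun_cong[OF u_comp_aword_prefix[OF order_refl]] by simp
  finally have "ext_elt v_inv 0 (transl lm p) = ?m p"
    by (cases "?m p") (simp add: v_inv_v)
  then show "?m p = (transl lam \<circ> ext_elt v_inv 0) p"
    by (cases p) (simp add: lam_inner_v_inv)
qed

lemma length_ls: "int (length ls) = two_rho_pairing"
  using t_red alen_transl_lm by simp

end

theorem lemma5p5:
  fixes R :: "'a::euclidean_space set" and simple :: "'i::finite \<Rightarrow> 'a"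
    and \<phi> lam :: 'a and w0 :: "'a \<Rightarrow> 'a"
    and ws1 ws2 :: "'i list"
    and u :: "'a \<times> real \<Rightarrow> 'a \<times> real" and ls :: "'i option list"
  assumes rs: "root_system R" and irr: "irreducible_rs R"
    and simp_sys: "simple_system R simple"
    and phi: "highest_short_root R simple \<phi>"
    and dom: "lam \<in> dominant_weights R simple"
    and w0: "is_longest simple (weyl simple) w0"
    and v_min: "word simple ws1 lam = w0 lam"
      "\<forall>y\<in>weyl simple. y lam = w0 lam \<longrightarrow> wlen simple (word simple ws1) \<le> wlen simple y"
    and v_red: "reduced_word simple ws1"
    and w0S: "is_longest simple (weyl_sub simple {i. lam \<bullet> coroot (simple i) = 0}) (word simple ws2)"
    and w0S_red: "reduced_word simple ws2"
    and u: "u \<in> Omega R simple"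
    and t_expr: "transl (w0 lam) = u \<circ> aword simple \<phi> ls"
    and t_red: "length ls = alen R simple (transl (w0 lam))"
    and sorted: "sorted_wrt (aff_prec simple (ws1 @ ws2) (w0 lam) w0) (aff_betas simple \<phi> ls)"
    and exhaust: "set (aff_betas simple \<phi> ls) =
       {\<beta> \<in> aff_pos R simple. transl (w0 lam) \<beta> \<in> aff_neg R simple}"
  shows "(let m = u \<circ> aword simple \<phi> (drop (length ws1) ls);
              C = {transl lam \<circ> ext_elt w 0 | w. w \<in> weyl simple} in
            m \<in> C \<and> (\<forall>y\<in>C. y \<noteq> m \<longrightarrow> alen R simple m < alen R simple y) \<and>
            alen R simple m = length ls - length ws1)
       \<and> (\<forall>k < length ws1. u \<circ> aff_refl simple \<phi> (ls ! k) = aff_refl simple \<phi> (Some (ws1 ! k)) \<circ> u)"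
proof -
  interpret reduced_translation R simple w0 lam ws1 ws2 \<phi> u ls
    by unfold_locales (fact rs simp_sys w0 dom v_min v_red w0S w0S_red phi u t_expr t_red sorted exhaust)+
  have "int (alen R simple (u \<circ> aword simple \<phi> (drop M ls))) = int (length ls) - int M"
    using u_comp_aword_drop alen_transl_v_inv length_ls by simp
  then show ?thesis
    using u_comp_aword_drop v_inv_in_weyl transl_v_inv_shortest u_comp_aff_refl by (auto simp: Let_def)
qed

end
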